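(* Assume (A1)–(A4). Let $\boldsymbol\omega=\boldsymbol\omega^*(\boldsymbol\tau(\bar\tau^* ),\boldsymbol h)$ or $\boldsymbol\omega=\boldsymbol\omega^*(\boldsymbol\tau(\bar\tau^{**}),\boldsymbol h)$. Then $\|\boldsymbol\omega\|_1=O(1)$ and $\|\boldsymbol\omega\|_2^2=\Omega(m^{-1})$.
   Context: Setting: model $Y=m(X)+\sigma(X)\varepsilon$, $X\in[0,1]$, $\varepsilon$ independent of $X$ with mean 0, variance 1, PDF $f_\varepsilon$, CDF $F_\varepsilon$; data split into $m$ batches of sizes $n_i$, $n=\sum n_i$; global estimator $\widehat m(x)=\sum_{i=1}^m\sum_{j=1}^J\omega_{ij}\widehat m_i(x;\tau_{ij},h_{ij})$ with $\widehat m_i(x;\tau,h)$ the local linear quantile estimator at level $\tau$, bandwidth $h$, from batch $i$. Stacked vectors $\boldsymbol\omega,\boldsymbol\tau,\boldsymbol h\in\mathbb R^{mJ}$, $\mathbf 1_d$ all-ones vector, $\boldsymbol F_\varepsilon^{-1}(\boldsymbol\tau)=(F_\varepsilon^{-1}(\tau_{ij}))$. Notation: $\mathcal R(\boldsymbol h_i,\boldsymbol\tau_i)$ is the $J\times J$ matrix with entries $\frac{\tau_{ij}\wedge\tau_{ij'}-\tau_{ij}\tau_{ij'}}{\sqrt{h_{ij}h_{ij'}}f_\varepsilon(F_\varepsilon^{-1}(\tau_{ij}))f_\varepsilon(F_\varepsilon^{-1}(\tau_{ij'}))}$; $\mathcal R_1(\boldsymbol\tau_i)=\mathcal R(\mathbf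 1_J,\boldsymbol\tau_i)$; $\boldsymbol S(\boldsymbol\tau,\boldsymbol h)=\mathrm{diag}(n_i^{-1}\mathcal R(\boldsymbol h_i,\boldsymbol\tau_i))_{i=1}^m$. Optimal weights: $\boldsymbol\omega^*(\boldsymbol\tau,\boldsymbol h)=\frac{c_1\boldsymbol d_1-c_2\boldsymbol d_2}{c_1c_3-c_2^2}$ with $\boldsymbol d_1=\boldsymbol S^{-1}\mathbf 1_{mJ}$, $\boldsymbol d_2=\boldsymbol S^{-1}\boldsymbol F_\varepsilon^{-1}(\boldsymbol\tau)$, $c_1=\boldsymbol d_2^\top\boldsymbol F_\varepsilon^{-1}(\boldsymbol\tau)$, $c_2=\boldsymbol d_2^\top\mathbf 1_{mJ}$, $c_3=\boldsymbol d_1^\top\mathbf 1_{mJ}$. Quantile levels $\boldsymbol\tau(\bar\tau)$: entries $\bar\tau_{ij}=\bar\tau+\big(\frac{i+mj-m}{mJ}-\frac12(1+\frac1{mJ})\big)d_\tau$, with $(\bar\tau-d_\tau/2,\bar\tau+d_\tau/2)\subset(\delta_\tau,1-\delta_\tau)$; $\bar\tau^*$ solves $\mathbf 1_{mJ}^\top\boldsymbol F_\varepsilon^{-1}(\boldsymbol\tau(\bar\tau^* ))=0$; $\bar\tau^{**}$ solves $\mathbf 1_{mJ}^\top\boldsymbol S^{-1}(\boldsymbol\tau(\bar\tau^{**}),\boldsymbol h(1,\nu))\boldsymbol F_\varepsilon^{-1}(\boldsymbol\tau(\bar\tau^{**}))=0$ where $\boldsymbol h(\alpha,\nu)$ has entries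 $\alpha n_i^{-\nu}$. Assumptions. (A1) On an open $I_x\subseteq[0,1]$: $f_X,\sigma>0$; $f_X'',m'',\sigma''$ exist and continuous; $f_\varepsilon>0$ on $\mathbb R$ with $f'_\varepsilon$ continuous, bounded. (A2) $K$ Lipschitz, nonnegative, compactly supported, $\int K=1$, $\int uK=0$, $\int u^2K<\infty$, $\int K^2<\infty$, $K\ge\delta_K>0$ on some $[-s_K,s_K]$. (A3) $\sum\omega_{ij}=1$, $\sum\omega_{ij}F_\varepsilon^{-1}(\tau_{ij})=0$; constants $M_w>0$, $\delta_\tau\in(0,1/2)$, $0<\lambda_{\min}<\lambda_{\max}<\infty$ independent of $n,m$ with $\|\boldsymbol\omega\|_\infty<M_w$, $\delta_\tau<\tau_{ij}<1-\delta_\tau$, eigenvalues of each $\mathcal R_1(\boldsymbol\tau_i)$ in $(\lambda_{\min},\lambda_{\max})$. (A4) Constants $M_b>0$, $s\in(2/3,1]$ with $M_b^{-2}n^s<n_i<M_b^2n^s$; $h_{ij}=\Omega(n^{-s\nu})$ with $0<\nu<3-2/s$. Here $a_n=\Omega(b_n)$ means $a_n=O(b_n)$ and $b_n=O(a_n)$. *)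

theory Defs
  imports "HOL-Analysis.Analysis" "HOL-Library.Landau_Symbols" "Jordan_Normal_Form.Char_Poly"
begin

definition quantile :: "(real \<Rightarrow> real) \<Rightarrow> real \<Rightarrow> real" where
  "quantile F t = Inf {x. t \<le> F x}"

definition C2_on :: "real set \<Rightarrow> (real \<Rightarrow> real) \<Rightarrow> bool" where
  "C2_on I g \<longleftrightarrow> (\<exists>g1 g2. (\<forall>x\<in>I. (g has_real_derivative g1 x) (at x)
        \<and> (g1 has_real_derivative g2 x) (at x)) \<and> continuous_on I g2)"

text \<open>Matrix R(h_i, tau_i) (J x J); indices j = 1..J correspond to rows/columns 0..J-1.\<close>
definition Rmat :: "(real \<Rightarrow> real) \<Rightarrow> (real \<Rightarrow> real) \<Rightarrow> nat \<Rightarrow> (nat \<Rightarrow> real) \<Rightarrow> (nat \<Rightarrow> real) \<Rightarrow> real mat" where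
  "Rmat f F J hi ti = mat J J (\<lambda>(a, b).
     (min (ti (a+1)) (ti (b+1)) - ti (a+1) * ti (b+1)) /
     (sqrt (hi (a+1) * hi (b+1)) * f (quantile F (ti (a+1))) * f (quantile F (ti (b+1)))))"

definition R1mat :: "(real \<Rightarrow> real) \<Rightarrow> (real \<Rightarrow> real) \<Rightarrow> nat \<Rightarrow> (nat \<Rightarrow> real) \<Rightarrow> real mat" where
  "R1mat f F J ti = Rmat f F J (\<lambda>_. 1) ti"

text \<open>Stacking: entry (i,j), i = 1..m, j = 1..J, goes to position (i-1)*J + (j-1).\<close>
definition stackv :: "nat \<Rightarrow> nat \<Rightarrow> (nat \<Rightarrow> nat \<Rightarrow> real) \<Rightarrow> real vec" where
  "stackv m J v = vec (m * J) (\<lambda>p. v (p div J + 1) (p mod J + 1))"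

text \<open>S(tau,h) = diag(n_i^{-1} R(h_i, tau_i)), i = 1..m (block diagonal, mJ x mJ).\<close>
definition Smat :: "(real \<Rightarrow> real) \<Rightarrow> (real \<Rightarrow> real) \<Rightarrow> nat \<Rightarrow> nat \<Rightarrow> (nat \<Rightarrow> nat)
    \<Rightarrow> (nat \<Rightarrow> nat \<Rightarrow> real) \<Rightarrow> (nat \<Rightarrow> nat \<Rightarrow> real) \<Rightarrow> real mat" where
  "Smat f F m J nb t h = mat (m * J) (m * J) (\<lambda>(p, q).
     if p div J = q div J
     then (1 / real (nb (p div J + 1))) * (Rmat f F J (h (p div J + 1)) (t (p div J + 1)) $$ (p mod J, q mod J))
     else 0)"

definition minv :: "real mat \<Rightarrow> real mat" where
  "minv A = (THE B. B \<in> carrier_mat (dim_row A) (dim_row A)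
                 \<and> A * B = 1\<^sub>m (dim_row A) \<and> B * A = 1\<^sub>m (dim_row A))"

text \<open>Optimal weights omega^*(tau, h), returned as a function of (i,j), i = 1..m, j = 1..J.\<close>
definition omega_star :: "(real \<Rightarrow> real) \<Rightarrow> (real \<Rightarrow> real) \<Rightarrow> nat \<Rightarrow> nat \<Rightarrow> (nat \<Rightarrow> nat)
    \<Rightarrow> (nat \<Rightarrow> nat \<Rightarrow> real) \<Rightarrow> (nat \<Rightarrow> nat \<Rightarrow> real) \<Rightarrow> nat \<Rightarrow> nat \<Rightarrow> real" where
  "omega_star f F m J nb t h i j =
     (let Si = minv (Smat f F m J nb t h);
          one = stackv m J (\<lambda>_ _. 1);
          q = stackv m J (\<lambda>a b. quantile F (t a b));
          d1 = Si *\<^sub>v one;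
          d2 = Si *\<^sub>v q;
          c1 = d2 \<bullet> q;
          c2 = d2 \<bullet> one;
          c3 = d1 \<bullet> one;
          w = (1 / (c1 * c3 - c2\<^sup>2)) \<cdot>\<^sub>v (c1 \<cdot>\<^sub>v d1 - c2 \<cdot>\<^sub>v d2)
      in w $ ((i - 1) * J + (j - 1)))"

definition tau_grid :: "nat \<Rightarrow> nat \<Rightarrow> real \<Rightarrow> real \<Rightarrow> nat \<Rightarrow> nat \<Rightarrow> real" where
  "tau_grid m J dt tb i j = tb + ((real i + real m * real j - real m) / (real m * real J)
        - (1 / 2) * (1 + 1 / (real m * real J))) * dt"

definition ntot :: "nat \<Rightarrow> (nat \<Rightarrow> nat) \<Rightarrow> nat" where
  "ntot m nb = (\<Sum>i = 1..m. nb i)"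

end

theory Submission
  imports Defs
begin

text \<open>The weights omega* minimise the quadratic form omega' S omega under the two linear
  constraints sum omega = 1 and sum omega F^-1(tau) = 0 that (A3) imposes. Each diagonal block of
  S is, up to the factors 1/n_i, 1/sqrt h and 1/f(F^-1(tau)), the Brownian-bridge covariance
  min tau tau' - tau tau' at levels separated by a fixed gap, so the quadratic form of S lies between
  L |x|^2 and U |x|^2 with U/L bounded by (A4). Comparing omega* with the explicit feasible vector
  v = 1/N - c (q - mean q), whose squared norm is O(1/N) because the quantiles q = F^-1(tau) of
  the equally spaced grid are spread out, gives |omega*|_2^2 <= U/L |v|_2^2 = O(1/m).
  Cauchy-Schwarz turns this into |omega*|_1 = O(1), while sum omega = 1 forces
  |omega*|_2^2 >= 1/(m J).\<close>

section \<open>Distribution functions with a positive continuous density\<close>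

locale positive_density =
  fixes f F :: "real \<Rightarrow> real"
  assumes density_pos: "\<And>x. 0 < f x"
    and density_continuous: "continuous_on UNIV f"
    and density_integral: "(f has_integral 1) UNIV"
    and cdf_integral: "\<And>x. (f has_integral F x) {..x}"
begin

lemma cdf_diff_has_integral:
  assumes "x \<le> y"
  shows "(f has_integral (F y - F x)) {x..y}"
proof -
  have "((\<lambda>z. if z \<in> {..y} then f z else 0) has_integral F y) UNIV"
    and "((\<lambda>z. if z \<in> {..x} then f z else 0) has_integral F x) UNIV"
    using cdf_integral has_integral_restrict_UNIV by blast+
  from has_integral_diff[OF this]
  have "((\<lambda>z. if z \<in> {x..y} then f z else 0) has_integral F y - F x) UNIV"
    by (rule has_integral_spike[where S = "{x}", rotated 2]) (use assms in auto)
  then show ?thesis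
    using has_integral_restrict_UNIV by blast
qed

lemma strict_mono_cdf: "strict_mono F"
proof (rule strict_monoI)
  fix x y :: real
  assume "x < y"
  have "\<exists>z\<in>{x..y}. \<forall>u\<in>{x..y}. f z \<le> f u"
    by (rule continuous_attains_inf)
      (use \<open>x < y\<close> continuous_on_subset[OF density_continuous] in auto)
  then obtain z where z_min: "\<And>u. u \<in> {x..y} \<Longrightarrow> f z \<le> f u"
    by blast
  have "((\<lambda>_. f z) has_integral (y - x) * f z) {x..y}"
    using has_integral_const_real[of "f z" x y] \<open>x < y\<close> by simp
  from this cdf_diff_has_integral have "(y - x) * f z \<le> F y - F x"
    by (rule has_integral_le) (use z_min \<open>x < y\<close> in auto)
  moreover have "0 < (y - x) * f z"
    using \<open>x < y\<close> density_pos by simp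
  ultimately show "F x < F y"
    by simp
qed

lemma mono_cdf: "mono F"
  using strict_mono_cdf by (simp add: strict_mono_mono)

lemma cdf_lipschitz_on:
  assumes bound: "\<And>u. u \<in> {a..b} \<Longrightarrow> f u \<le> M" and "0 \<le> M"
  shows "M-lipschitz_on {a..b} F"
proof -
  have le: "F y - F x \<le> M * (y - x)" if "x \<le> y" "x \<in> {a..b}" "y \<in> {a..b}" for x y
  proof -
    have "((\<lambda>_. M) has_integral (y - x) * M) {x..y}"
      using has_integral_const_real[of M x y] that by simp
    with cdf_diff_has_integral[OF \<open>x \<le> y\<close>] have "F y - F x \<le> (y - x) * M"
      by (rule has_integral_le) (use that bound in auto)
    then show ?thesis
      by (simp add: mult.commute)
  qed
  show ?thesis
  proof (rule lipschitz_onI)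
    fix x y
    assume "x \<in> {a..b}" "y \<in> {a..b}"
    then show "dist (F x) (F y) \<le> M * dist x y"
      using le[of x y] le[of y x] monoD[OF mono_cdf, of x y] monoD[OF mono_cdf, of y x]
      by (cases "x \<le> y") (auto simp: dist_real_def)
  qed fact
qed

lemma cdf_nonneg: "0 \<le> F x"
  by (rule has_integral_nonneg[OF cdf_integral]) (use density_pos less_imp_le in blast)

lemma cdf_le_1: "F x \<le> 1"
  by (rule has_integral_subset_le[OF _ cdf_integral density_integral])
    (use density_pos less_imp_le in auto)

lemma cdf_tails:
  assumes "0 < e"
  obtains a b where "F a < e" "1 - e < F b"
proof -
  have "\<not> (\<exists>a b. (UNIV :: real set) = cbox a b)"
    by (metis bounded_cbox not_bounded_UNIV)
  from has_integral_altD[OF density_integral this assms]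
  obtain B where "0 < B" and approx: "\<And>a b. ball 0 B \<subseteq> cbox a b \<Longrightarrow>
      \<exists>z. ((\<lambda>x. if x \<in> UNIV then f x else 0) has_integral z) (cbox a b) \<and> norm (z - 1) < e"
    by metis
  have "ball 0 B \<subseteq> cbox (-B) B"
    by (auto simp: dist_real_def)
  from approx[OF this] obtain z where z: "(f has_integral z) {-B..B}" "\<bar>z - 1\<bar> < e"
    by auto
  have "z = F B - F (-B)"
    using has_integral_unique[OF z(1) cdf_diff_has_integral] \<open>0 < B\<close> by simp
  then show ?thesis
    using that[of "-B" B] z(2) cdf_nonneg[of "-B"] cdf_le_1[of B] by linarith
qed

lemma quantile_in_interval:
  assumes "a \<le> b" and "F a < t" "t < F b"
  shows "quantile F t \<in> {a..b} \<and> F (quantile F t) = t"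
proof -
  have "\<exists>z\<in>{a..b}. \<forall>u\<in>{a..b}. f u \<le> f z"
    by (rule continuous_attains_sup)
      (use \<open>a \<le> b\<close> continuous_on_subset[OF density_continuous] in auto)
  then obtain M where M: "\<And>u. u \<in> {a..b} \<Longrightarrow> f u \<le> M"
    by blast
  have "0 \<le> M"
    using M[of a] density_pos[of a] \<open>a \<le> b\<close> by simp
  then have "continuous_on {a..b} F"
    using cdf_lipschitz_on[OF M] lipschitz_on_continuous_on by blast
  then obtain x0 where x0: "x0 \<in> {a..b}" "F x0 = t"
    using IVT'[of F a t b] assms by auto
  have "{x. t \<le> F x} = {x0..}"
    using x0(2) strict_mono_less_eq[OF strict_mono_cdf] by auto
  then have "quantile F t = x0"
    unfolding quantile_def by simp
  with x0 show ?thesis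
    by simp
qed

lemma density_bounds:
  assumes "a \<le> b"
  obtains fmin fmax where "0 < fmin" and "\<And>u. u \<in> {a..b} \<Longrightarrow> fmin \<le> f u \<and> f u \<le> fmax"
proof -
  have cont: "continuous_on {a..b} f"
    using continuous_on_subset[OF density_continuous] by blast
  have "\<exists>z\<in>{a..b}. \<forall>u\<in>{a..b}. f z \<le> f u"
    by (rule continuous_attains_inf) (use \<open>a \<le> b\<close> cont in auto)
  moreover have "\<exists>z\<in>{a..b}. \<forall>u\<in>{a..b}. f u \<le> f z"
    by (rule continuous_attains_sup) (use \<open>a \<le> b\<close> cont in auto)
  ultimately obtain z0 z1 where "\<And>u. u \<in> {a..b} \<Longrightarrow> f z0 \<le> f u \<and> f u \<le> f z1"
    by blast
  then show ?thesis
    using that[of "f z0" "f z1"] density_pos by blast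
qed

lemma quantile_bracket:
  assumes "0 < e"
  obtains a b where "a \<le> b"
    and "\<And>t. e < t \<Longrightarrow> t < 1 - e \<Longrightarrow> quantile F t \<in> {a..b} \<and> F (quantile F t) = t"
proof -
  obtain a b where ab: "F a < e" "1 - e < F b"
    using cdf_tails[OF assms] .
  show ?thesis
  proof (cases "a \<le> b")
    case True
    show ?thesis
    proof (rule that[OF True])
      fix t
      assume "e < t" "t < 1 - e"
      then show "quantile F t \<in> {a..b} \<and> F (quantile F t) = t"
        using quantile_in_interval[OF True] ab by simp
    qed
  next
    case False
    then have "F b \<le> F a"
      using monoD[OF mono_cdf, of b a] by simp
    then show ?thesis
      using ab by (intro that[of 0 0]) auto
  qed
qed

lemma quantile_bracket_regular:
  assumes "0 < e"
  obtains a b fmin fmax where "a \<le> b" and "0 < fmin"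
    and "\<And>t. e < t \<Longrightarrow> t < 1 - e \<Longrightarrow> quantile F t \<in> {a..b} \<and> F (quantile F t) = t"
    and "\<And>u. u \<in> {a..b} \<Longrightarrow> fmin \<le> f u \<and> f u \<le> fmax"
    and "fmax-lipschitz_on {a..b} F"
proof -
  obtain a b where "a \<le> b"
    and quantile: "\<And>t. e < t \<Longrightarrow> t < 1 - e \<Longrightarrow> quantile F t \<in> {a..b} \<and> F (quantile F t) = t"
    using quantile_bracket[OF assms] by blast
  obtain fmin fmax where "0 < fmin" and bounds: "\<And>u. u \<in> {a..b} \<Longrightarrow> fmin \<le> f u \<and> f u \<le> fmax"
    using density_bounds[OF \<open>a \<le> b\<close>] by blast
  have "0 \<le> fmax"
    using bounds[of a] \<open>a \<le> b\<close> \<open>0 < fmin\<close> by simp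
  with bounds have "fmax-lipschitz_on {a..b} F"
    by (intro cdf_lipschitz_on) blast+
  with \<open>a \<le> b\<close> \<open>0 < fmin\<close> quantile bounds show ?thesis
    by (rule that)
qed

end

section \<open>The Brownian bridge covariance\<close>

lemma sum_atLeastLessThan_eq_sum_if:
  fixes y :: "nat \<Rightarrow> 'a::comm_monoid_add"
  shows "(\<Sum>a\<in>{k..<J}. y a) = (\<Sum>a<J. if k \<le> a then y a else 0)"
proof -
  have "{a \<in> {..<J}. k \<le> a} = {k..<J}"
    by auto
  then show ?thesis
    by (metis (no_types) sum.inter_filter finite_lessThan)
qed

lemma sum_atMost_eq_sum_if:
  fixes \<delta> :: "nat \<Rightarrow> 'a::comm_monoid_add"
  assumes "a \<le> J"
  shows "(\<Sum>k\<le>J. if k \<le> a then \<delta> k else 0) = (\<Sum>k\<le>a. \<delta> k)"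
proof -
  have "{k \<in> {..J}. k \<le> a} = {..a}"
    using assms by auto
  then show ?thesis
    by (metis (no_types) sum.inter_filter finite_atMost)
qed

lemma increment_sum_tail_sums:
  fixes t y \<delta> :: "nat \<Rightarrow> real"
  assumes t_eq: "\<And>a. a < J \<Longrightarrow> t a = (\<Sum>k\<le>a. \<delta> k)"
  shows "(\<Sum>k\<le>J. \<delta> k * (\<Sum>a\<in>{k..<J}. y a)) = (\<Sum>a<J. y a * t a)"
proof -
  have "(\<Sum>k\<le>J. \<delta> k * (\<Sum>a\<in>{k..<J}. y a))
      = (\<Sum>a<J. y a * (\<Sum>k\<le>J. if k \<le> a then \<delta> k else 0))"
    unfolding sum_atLeastLessThan_eq_sum_if sum_distrib_left
    by (subst sum.swap) (intro sum.cong refl, simp)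
  also have "\<dots> = (\<Sum>a<J. y a * t a)"
    by (intro sum.cong refl) (simp add: sum_atMost_eq_sum_if t_eq)
  finally show ?thesis .
qed

lemma increment_sum_tail_sums_sq:
  fixes t y \<delta> :: "nat \<Rightarrow> real"
  assumes t_eq: "\<And>a. a < J \<Longrightarrow> t a = (\<Sum>k\<le>a. \<delta> k)"
    and nonneg: "\<And>k. k \<le> J \<Longrightarrow> 0 \<le> \<delta> k"
  shows "(\<Sum>k\<le>J. \<delta> k * (\<Sum>a\<in>{k..<J}. y a)\<^sup>2)
       = (\<Sum>a<J. \<Sum>b<J. min (t a) (t b) * y a * y b)"
proof -
  have mono: "t a \<le> t b" if "a \<le> b" "b < J" for a b
    unfolding t_eq[OF \<open>b < J\<close>] t_eq[OF le_less_trans[OF that]]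
    by (rule sum_mono2) (use that nonneg in auto)
  have min_eq: "(\<Sum>k\<le>J. if k \<le> min a b then \<delta> k else 0) = min (t a) (t b)"
    if "a < J" "b < J" for a b
    using that mono[of a b] mono[of b a] t_eq[of "min a b"]
    by (cases "a \<le> b") (simp_all add: sum_atMost_eq_sum_if min_def)
  have "(\<Sum>a\<in>{k..<J}. y a)\<^sup>2 = (\<Sum>a<J. \<Sum>b<J. if k \<le> min a b then y a * y b else 0)" for k
    by (simp add: sum_atLeastLessThan_eq_sum_if power2_eq_square sum_product if_distrib
        cong: if_cong) (intro sum.cong refl, auto)
  then have "(\<Sum>k\<le>J. \<delta> k * (\<Sum>a\<in>{k..<J}. y a)\<^sup>2)
      = (\<Sum>k\<le>J. \<Sum>a<J. \<Sum>b<J. y a * y b * (if k \<le> min a b then \<delta> k else 0))"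
    by (simp add: sum_distrib_left) (intro sum.cong refl, auto)
  also have "\<dots> = (\<Sum>a<J. \<Sum>b<J. y a * y b * (\<Sum>k\<le>J. if k \<le> min a b then \<delta> k else 0))"
    by (simp only: sum_distrib_left sum.swap[of _ "{..J}"])
  also have "\<dots> = (\<Sum>a<J. \<Sum>b<J. min (t a) (t b) * y a * y b)"
  proof (intro sum.cong refl)
    fix a b
    assume "a \<in> {..<J}" "b \<in> {..<J}"
    then show "y a * y b * (\<Sum>k\<le>J. if k \<le> min a b then \<delta> k else 0)
        = min (t a) (t b) * y a * y b"
      using min_eq[of a b] by simp
  qed
  finally show ?thesis .
qed

text \<open>min s t - s t is the covariance of the Brownian bridge; splitting the bridge into
  independent increments writes its quadratic form as a positive combination of squares.\<close>

lemma bridge_form_eq_increment_sum: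
  fixes t y \<delta> :: "nat \<Rightarrow> real"
  assumes t_eq: "\<And>a. a < J \<Longrightarrow> t a = (\<Sum>k\<le>a. \<delta> k)"
    and total: "(\<Sum>k\<le>J. \<delta> k) = 1"
    and nonneg: "\<And>k. k \<le> J \<Longrightarrow> 0 \<le> \<delta> k"
  shows "(\<Sum>a<J. \<Sum>b<J. (min (t a) (t b) - t a * t b) * y a * y b)
       = (\<Sum>k\<le>J. \<delta> k * ((\<Sum>a\<in>{k..<J}. y a) - (\<Sum>a<J. y a * t a))\<^sup>2)"
proof -
  define S where "S k = (\<Sum>a\<in>{k..<J}. y a)" for k
  define T where "T = (\<Sum>a<J. y a * t a)"
  have linear: "(\<Sum>k\<le>J. \<delta> k * S k) = T"
    unfolding S_def T_def by (rule increment_sum_tail_sums[OF t_eq])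
  have quadratic: "(\<Sum>k\<le>J. \<delta> k * (S k)\<^sup>2) = (\<Sum>a<J. \<Sum>b<J. min (t a) (t b) * y a * y b)"
    unfolding S_def by (rule increment_sum_tail_sums_sq[OF t_eq nonneg])
  have "(\<Sum>a<J. \<Sum>b<J. t a * t b * y a * y b) = T\<^sup>2"
    by (simp add: T_def power2_eq_square sum_product) (intro sum.cong refl, simp)
  then have "(\<Sum>a<J. \<Sum>b<J. (min (t a) (t b) - t a * t b) * y a * y b)
      = (\<Sum>k\<le>J. \<delta> k * (S k)\<^sup>2) - 2 * T * (\<Sum>k\<le>J. \<delta> k * S k) + T\<^sup>2 * (\<Sum>k\<le>J. \<delta> k)"
    unfolding quadratic linear total
    by (simp add: left_diff_distrib sum_subtractf power2_eq_square)
  also have "\<dots> = (\<Sum>k\<le>J. \<delta> k * (S k - T)\<^sup>2)"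
    by (simp add: power2_diff sum.distrib sum_subtractf sum_distrib_left sum_distrib_right
        algebra_simps)
  finally show ?thesis
    unfolding S_def T_def .
qed

lemma sum_sq_le_four_sum_sq_tail_sums:
  fixes y :: "nat \<Rightarrow> real" and T :: real
  shows "(\<Sum>a<J. (y a)\<^sup>2) \<le> 4 * (\<Sum>k\<le>J. ((\<Sum>a\<in>{k..<J}. y a) - T)\<^sup>2)"
proof -
  define c where "c k = (\<Sum>a\<in>{k..<J}. y a) - T" for k
  have "y a = c a - c (Suc a)" if "a < J" for a
    using that by (simp add: c_def sum.atLeast_Suc_lessThan)
  moreover have "(u - v)\<^sup>2 \<le> 2 * u\<^sup>2 + 2 * v\<^sup>2" for u v :: real
    using zero_le_power2[of "u + v"] by (simp add: power2_diff power2_sum)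
  ultimately have "(\<Sum>a<J. (y a)\<^sup>2) \<le> (\<Sum>a<J. 2 * (c a)\<^sup>2 + 2 * (c (Suc a))\<^sup>2)"
    by (intro sum_mono) simp
  also have "\<dots> = 2 * (\<Sum>a<J. (c a)\<^sup>2) + 2 * (\<Sum>a<J. (c (Suc a))\<^sup>2)"
    by (simp add: sum.distrib sum_distrib_left)
  also have "\<dots> \<le> 4 * (\<Sum>k\<le>J. (c k)\<^sup>2)"
  proof -
    have "(\<Sum>a<J. (c a)\<^sup>2) \<le> (\<Sum>k\<le>J. (c k)\<^sup>2)"
      by (rule sum_mono2) auto
    moreover have "(\<Sum>k\<le>J. (c k)\<^sup>2) = (c 0)\<^sup>2 + (\<Sum>a<J. (c (Suc a))\<^sup>2)"
      by (subst lessThan_Suc_atMost[symmetric], subst sum.lessThan_Suc_shift) simp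
    ultimately show ?thesis
      using zero_le_power2[of "c 0"] by linarith
  qed
  finally show ?thesis
    unfolding c_def .
qed

lemma bridge_form_lower_bound:
  fixes t y :: "nat \<Rightarrow> real"
  assumes "1 \<le> J" and "0 < g" and "g \<le> t 0"
    and gaps: "\<And>a. Suc a < J \<Longrightarrow> t a + g \<le> t (Suc a)" and "t (J - 1) + g \<le> 1"
  shows "g / 4 * (\<Sum>a<J. (y a)\<^sup>2) \<le> (\<Sum>a<J. \<Sum>b<J. (min (t a) (t b) - t a * t b) * y a * y b)"
proof -
  define t' where "t' k = (if k < J then t k else 1)" for k
  define \<delta> where "\<delta> k = t' k - (if k = 0 then 0 else t' (k - 1))" for k
  define c where "c k = (\<Sum>a\<in>{k..<J}. y a) - (\<Sum>a<J. y a * t a)" for k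
  have telescope: "(\<Sum>k\<le>a. \<delta> k) = t' a" for a
    by (induction a) (auto simp: \<delta>_def)
  have \<delta>_ge: "g \<le> \<delta> k" if k: "k \<le> J" for k
  proof -
    consider "k = 0" | "0 < k" "k < J" | "0 < k" "k = J"
      using k by (metis le_neq_implies_less neq0_conv)
    then show ?thesis
      by cases (use assms gaps[of "k - 1"] in \<open>auto simp: \<delta>_def t'_def\<close>)
  qed
  have "(\<Sum>a<J. \<Sum>b<J. (min (t a) (t b) - t a * t b) * y a * y b) = (\<Sum>k\<le>J. \<delta> k * (c k)\<^sup>2)"
    unfolding c_def
    by (rule bridge_form_eq_increment_sum)
      (use telescope \<delta>_ge \<open>0 < g\<close> in \<open>auto simp: t'_def intro: order_trans[of 0 g]\<close>)
  moreover have "g * (\<Sum>k\<le>J. (c k)\<^sup>2) \<le> (\<Sum>k\<le>J. \<delta> k * (c k)\<^sup>2)"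
    unfolding sum_distrib_left by (intro sum_mono mult_right_mono) (auto simp: \<delta>_ge)
  moreover have "g / 4 * (\<Sum>a<J. (y a)\<^sup>2) \<le> g * (\<Sum>k\<le>J. (c k)\<^sup>2)"
    using sum_sq_le_four_sum_sq_tail_sums[where J = J and y = y and T = "\<Sum>a<J. y a * t a"]
      \<open>0 < g\<close>
    unfolding c_def by simp
  ultimately show ?thesis
    by linarith
qed

lemma bridge_kernel_abs_le_1:
  fixes u v :: real
  assumes "0 \<le> u" "u \<le> 1" "0 \<le> v" "v \<le> 1"
  shows "\<bar>min u v - u * v\<bar> \<le> 1"
proof -
  have "u * v \<le> min u v"
    using assms by (simp add: mult_left_le mult_le_one mult_left_le_one_le)
  moreover have "min u v \<le> 1" "0 \<le> u * v"
    using assms by auto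
  ultimately show ?thesis
    by linarith
qed

lemma quadratic_form_le_card_mult_sum_sq:
  fixes B :: "nat \<Rightarrow> nat \<Rightarrow> real" and y :: "nat \<Rightarrow> real"
  assumes "\<And>a b. a < J \<Longrightarrow> b < J \<Longrightarrow> \<bar>B a b\<bar> \<le> 1"
  shows "(\<Sum>a<J. \<Sum>b<J. B a b * y a * y b) \<le> real J * (\<Sum>a<J. (y a)\<^sup>2)"
proof -
  have "B a b * y a * y b \<le> ((y a)\<^sup>2 + (y b)\<^sup>2) / 2" if "a < J" "b < J" for a b
  proof -
    have "B a b * y a * y b \<le> \<bar>B a b\<bar> * \<bar>y a * y b\<bar>"
      by (metis abs_ge_self abs_mult mult.assoc)
    also have "\<dots> \<le> \<bar>y a * y b\<bar>"
      using assms[OF that] by (simp add: mult_left_le_one_le)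
    also have "\<dots> \<le> ((y a)\<^sup>2 + (y b)\<^sup>2) / 2"
      using zero_le_power2[of "\<bar>y a\<bar> - \<bar>y b\<bar>"] by (simp add: power2_diff abs_mult)
    finally show ?thesis .
  qed
  then have "(\<Sum>a<J. \<Sum>b<J. B a b * y a * y b) \<le> (\<Sum>a<J. \<Sum>b<J. ((y a)\<^sup>2 + (y b)\<^sup>2) / 2)"
    by (intro sum_mono) auto
  also have "\<dots> = real J * (\<Sum>a<J. (y a)\<^sup>2)"
    by (simp add: sum.distrib sum_divide_distrib[symmetric] sum.swap[of "\<lambda>a b. (y b)\<^sup>2"]
        field_simps sum_distrib_left)
  finally show ?thesis .
qed

section \<open>Quadratic forms of the covariance matrices\<close>

lemma Rmat_quadratic_form_eq:
  fixes X ti hi :: "nat \<Rightarrow> real" and f F :: "real \<Rightarrow> real"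
  assumes pos: "\<And>j. j \<in> {1..J} \<Longrightarrow> 0 < hi j \<and> 0 < f (quantile F (ti j))"
  shows "(\<Sum>a<J. \<Sum>b<J. Rmat f F J hi ti $$ (a, b) * X a * X b)
       = (\<Sum>a<J. \<Sum>b<J. (min (ti (a + 1)) (ti (b + 1)) - ti (a + 1) * ti (b + 1))
            * (X a / (sqrt (hi (a + 1)) * f (quantile F (ti (a + 1)))))
            * (X b / (sqrt (hi (b + 1)) * f (quantile F (ti (b + 1))))))"
proof (intro sum.cong refl)
  fix a b
  assume "a \<in> {..<J}" "b \<in> {..<J}"
  then have "0 < sqrt (hi (a + 1)) * f (quantile F (ti (a + 1)))"
    and "0 < sqrt (hi (b + 1)) * f (quantile F (ti (b + 1)))"
    using pos[of "a + 1"] pos[of "b + 1"] by auto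
  with \<open>a \<in> {..<J}\<close> \<open>b \<in> {..<J}\<close> show "Rmat f F J hi ti $$ (a, b) * X a * X b
      = (min (ti (a + 1)) (ti (b + 1)) - ti (a + 1) * ti (b + 1))
        * (X a / (sqrt (hi (a + 1)) * f (quantile F (ti (a + 1)))))
        * (X b / (sqrt (hi (b + 1)) * f (quantile F (ti (b + 1)))))"
    by (simp add: Rmat_def real_sqrt_mult mult_ac)
qed

lemma Rmat_quadratic_form_lower:
  fixes X ti hi :: "nat \<Rightarrow> real" and f F :: "real \<Rightarrow> real"
  assumes "1 \<le> J" and "0 < g" and first: "g \<le> ti 1"
    and gaps: "\<And>j. 1 \<le> j \<Longrightarrow> j < J \<Longrightarrow> ti j + g \<le> ti (j + 1)" and last: "ti J + g \<le> 1"
    and density: "\<And>j. j \<in> {1..J} \<Longrightarrow> 0 < f (quantile F (ti j)) \<and> f (quantile F (ti j)) \<le> fmax"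
    and bandwidth: "\<And>j. j \<in> {1..J} \<Longrightarrow> 0 < hi j \<and> hi j \<le> hu"
  shows "g / (4 * hu * fmax\<^sup>2) * (\<Sum>a<J. (X a)\<^sup>2)
       \<le> (\<Sum>a<J. \<Sum>b<J. Rmat f F J hi ti $$ (a, b) * X a * X b)"
proof -
  define d where "d a = sqrt (hi (a + 1)) * f (quantile F (ti (a + 1)))" for a
  have pos: "0 < hi j \<and> 0 < f (quantile F (ti j))" if "j \<in> {1..J}" for j
    using bandwidth[OF that] density[OF that] by simp
  have "(X a)\<^sup>2 / (hu * fmax\<^sup>2) \<le> (X a / d a)\<^sup>2" if "a < J" for a
  proof -
    have "0 < (d a)\<^sup>2" "(d a)\<^sup>2 \<le> hu * fmax\<^sup>2"
      using bandwidth[of "a + 1"] density[of "a + 1"] that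
      by (auto simp: d_def power_mult_distrib intro!: mult_mono power_mono)
    moreover from this have "0 < hu * fmax\<^sup>2 * (d a)\<^sup>2"
      by (metis less_le_trans mult_pos_pos)
    ultimately show ?thesis
      unfolding power_divide by (intro divide_left_mono) simp_all
  qed
  then have X_le: "(\<Sum>a<J. (X a)\<^sup>2) / (hu * fmax\<^sup>2) \<le> (\<Sum>a<J. (X a / d a)\<^sup>2)"
    unfolding sum_divide_distrib by (intro sum_mono) auto
  have "g / (4 * hu * fmax\<^sup>2) * (\<Sum>a<J. (X a)\<^sup>2) = g / 4 * ((\<Sum>a<J. (X a)\<^sup>2) / (hu * fmax\<^sup>2))"
    by simp
  also have "\<dots> \<le> g / 4 * (\<Sum>a<J. (X a / d a)\<^sup>2)"
    using \<open>0 < g\<close> X_le by (intro mult_left_mono) auto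
  also have "\<dots> \<le> (\<Sum>a<J. \<Sum>b<J. (min (ti (a + 1)) (ti (b + 1)) - ti (a + 1) * ti (b + 1))
      * (X a / d a) * (X b / d b))"
  proof (rule bridge_form_lower_bound)
    show "ti (J - 1 + 1) + g \<le> 1"
      using last \<open>1 \<le> J\<close> by simp
  qed (use \<open>1 \<le> J\<close> \<open>0 < g\<close> first gaps in simp_all)
  finally show ?thesis
    using Rmat_quadratic_form_eq[where f = f and F = F and hi = hi and ti = ti, OF pos]
    by (simp add: d_def)
qed

lemma Rmat_quadratic_form_upper:
  fixes X ti hi :: "nat \<Rightarrow> real" and f F :: "real \<Rightarrow> real"
  assumes levels: "\<And>j. j \<in> {1..J} \<Longrightarrow> 0 < ti j \<and> ti j < 1"
    and density: "\<And>j. j \<in> {1..J} \<Longrightarrow> fmin \<le> f (quantile F (ti j))" and "0 < fmin"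
    and bandwidth: "\<And>j. j \<in> {1..J} \<Longrightarrow> hl \<le> hi j" and "0 < hl"
  shows "(\<Sum>a<J. \<Sum>b<J. Rmat f F J hi ti $$ (a, b) * X a * X b)
       \<le> real J / (hl * fmin\<^sup>2) * (\<Sum>a<J. (X a)\<^sup>2)"
proof -
  define d where "d a = sqrt (hi (a + 1)) * f (quantile F (ti (a + 1)))" for a
  have pos: "0 < hi j \<and> 0 < f (quantile F (ti j))" if "j \<in> {1..J}" for j
    using bandwidth[OF that] density[OF that] \<open>0 < hl\<close> \<open>0 < fmin\<close> by linarith
  have "(\<Sum>a<J. \<Sum>b<J. (min (ti (a + 1)) (ti (b + 1)) - ti (a + 1) * ti (b + 1))
      * (X a / d a) * (X b / d b)) \<le> real J * (\<Sum>a<J. (X a / d a)\<^sup>2)"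
  proof (rule quadratic_form_le_card_mult_sum_sq)
    fix a b
    assume "a < J" "b < J"
    then show "\<bar>min (ti (a + 1)) (ti (b + 1)) - ti (a + 1) * ti (b + 1)\<bar> \<le> 1"
      using levels[of "a + 1"] levels[of "b + 1"] by (intro bridge_kernel_abs_le_1) auto
  qed
  then have "(\<Sum>a<J. \<Sum>b<J. Rmat f F J hi ti $$ (a, b) * X a * X b)
      \<le> real J * (\<Sum>a<J. (X a / d a)\<^sup>2)"
    using Rmat_quadratic_form_eq[where f = f and F = F and hi = hi and ti = ti, OF pos]
    by (simp add: d_def)
  also have "\<dots> \<le> real J * (\<Sum>a<J. (X a)\<^sup>2 / (hl * fmin\<^sup>2))"
  proof (intro mult_left_mono sum_mono)
    fix a
    assume "a \<in> {..<J}"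
    then have "hl * fmin\<^sup>2 \<le> (d a)\<^sup>2"
      using bandwidth[of "a + 1"] density[of "a + 1"] \<open>0 < hl\<close> \<open>0 < fmin\<close>
      by (auto simp: d_def power_mult_distrib intro!: mult_mono power_mono)
    moreover from this have "0 < (d a)\<^sup>2 * (hl * fmin\<^sup>2)"
      using \<open>0 < hl\<close> \<open>0 < fmin\<close> by (metis less_le_trans mult_pos_pos zero_less_power2
          power_not_zero less_numeral_extra(3))
    ultimately show "(X a / d a)\<^sup>2 \<le> (X a)\<^sup>2 / (hl * fmin\<^sup>2)"
      unfolding power_divide by (intro divide_left_mono) simp_all
  qed simp
  finally show ?thesis
    by (simp add: sum_divide_distrib[symmetric])
qed

lemma sum_lessThan_mult_eq_sum_blocks:
  fixes g :: "nat \<Rightarrow> 'a::comm_monoid_add"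
  shows "(\<Sum>p<m * J. g p) = (\<Sum>i<m. \<Sum>a<J. g (i * J + a))"
proof -
  have "(\<Sum>a<J. g (i * J + a)) = sum g {i * J..<i * J + J}" for i
    using sum.shift_bounds_nat_ivl[of g 0 "i * J" J] by (simp add: atLeast0LessThan add.commute)
  then show ?thesis
    using sum.nat_group[of g J m] by (simp add: mult.commute)
qed

lemma scalar_prod_mult_mat_vec_eq_sum:
  fixes A :: "real mat"
  assumes "A \<in> carrier_mat N N" "x \<in> carrier_vec N" "y \<in> carrier_vec N"
  shows "x \<bullet> (A *\<^sub>v y) = (\<Sum>p<N. \<Sum>q<N. A $$ (p, q) * x $ p * y $ q)"
  using assms
  by (auto simp: scalar_prod_def atLeast0LessThan row_def sum_distrib_left intro!: sum.cong)

lemma scalar_prod_self_eq_sum: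
  "x \<in> carrier_vec N \<Longrightarrow> x \<bullet> x = (\<Sum>p<N. (x $ p)\<^sup>2 :: real)"
  by (simp add: scalar_prod_def atLeast0LessThan power2_eq_square)

lemma Smat_carrier: "Smat f F m J nb t h \<in> carrier_mat (m * J) (m * J)"
  unfolding Smat_def by simp

lemma transpose_Smat: "(Smat f F m J nb t h)\<^sup>T = Smat f F m J nb t h"
proof (rule eq_matI)
  fix p q
  assume "p < dim_row (Smat f F m J nb t h)" "q < dim_col (Smat f F m J nb t h)"
  then have "p < m * J" "q < m * J" "0 < J"
    by (auto simp: Smat_def intro: Nat.gr0I)
  then show "(Smat f F m J nb t h)\<^sup>T $$ (p, q) = Smat f F m J nb t h $$ (p, q)"
    by (auto simp: Smat_def Rmat_def ac_simps)
qed (simp_all add: Smat_def)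

lemma Smat_quadratic_form:
  assumes "x \<in> carrier_vec (m * J)"
  shows "x \<bullet> (Smat f F m J nb t h *\<^sub>v x) = (\<Sum>i<m. (\<Sum>a<J. \<Sum>b<J.
      Rmat f F J (h (i + 1)) (t (i + 1)) $$ (a, b) * x $ (i * J + a) * x $ (i * J + b))
        / real (nb (i + 1)))"
proof -
  have block: "i * J + a < m * J" if "i < m" "a < J" for i a
  proof -
    have "i * J + a < Suc i * J"
      using that by simp
    also have "\<dots> \<le> m * J"
      using that by (intro mult_right_mono) auto
    finally show ?thesis .
  qed
  have "x \<bullet> (Smat f F m J nb t h *\<^sub>v x) = (\<Sum>i<m. \<Sum>a<J. \<Sum>i'<m. \<Sum>b<J.
      Smat f F m J nb t h $$ (i * J + a, i' * J + b) * x $ (i * J + a) * x $ (i' * J + b))"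
    by (simp add: scalar_prod_mult_mat_vec_eq_sum[OF Smat_carrier assms assms]
        sum_lessThan_mult_eq_sum_blocks)
  also have "\<dots> = (\<Sum>i<m. \<Sum>a<J. \<Sum>i'<m. if i' = i then (\<Sum>b<J.
      Rmat f F J (h (i + 1)) (t (i + 1)) $$ (a, b) * x $ (i * J + a) * x $ (i * J + b)
        / real (nb (i + 1))) else 0)"
    by (intro sum.cong refl) (auto simp: Smat_def block intro!: sum.cong)
  also have "\<dots> = (\<Sum>i<m. (\<Sum>a<J. \<Sum>b<J.
      Rmat f F J (h (i + 1)) (t (i + 1)) $$ (a, b) * x $ (i * J + a) * x $ (i * J + b))
        / real (nb (i + 1)))"
    by (simp add: sum_divide_distrib)
  finally show ?thesis .
qed

lemma Smat_quadratic_form_bounds: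
  fixes x :: "real vec" and t h :: "nat \<Rightarrow> nat \<Rightarrow> real" and nb :: "nat \<Rightarrow> nat"
  assumes "1 \<le> J" and "0 < g"
    and gaps: "\<And>i. i \<in> {1..m} \<Longrightarrow> g \<le> t i 1 \<and> t i J + g \<le> 1
                \<and> (\<forall>j. 1 \<le> j \<longrightarrow> j < J \<longrightarrow> t i j + g \<le> t i (j + 1))"
    and levels: "\<And>i j. i \<in> {1..m} \<Longrightarrow> j \<in> {1..J} \<Longrightarrow> 0 < t i j \<and> t i j < 1"
    and density: "\<And>i j. i \<in> {1..m} \<Longrightarrow> j \<in> {1..J} \<Longrightarrow>
                    fmin \<le> f (quantile F (t i j)) \<and> f (quantile F (t i j)) \<le> fmax"
    and "0 < fmin"
    and bandwidth: "\<And>i j. i \<in> {1..m} \<Longrightarrow> j \<in> {1..J} \<Longrightarrow> hl \<le> h i j \<and> h i j \<le> hu"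
    and "0 < hl"
    and size: "\<And>i. i \<in> {1..m} \<Longrightarrow> nl \<le> real (nb i) \<and> real (nb i) \<le> nh" and "0 < nl"
    and x: "x \<in> carrier_vec (m * J)"
  shows "g / (4 * hu * fmax\<^sup>2) / nh * (x \<bullet> x) \<le> x \<bullet> (Smat f F m J nb t h *\<^sub>v x)"
    and "x \<bullet> (Smat f F m J nb t h *\<^sub>v x) \<le> real J / (hl * fmin\<^sup>2) / nl * (x \<bullet> x)"
proof -
  define L where "L = g / (4 * hu * fmax\<^sup>2)"
  define U where "U = real J / (hl * fmin\<^sup>2)"
  define Q where "Q i = (\<Sum>a<J. \<Sum>b<J.
      Rmat f F J (h (i + 1)) (t (i + 1)) $$ (a, b) * x $ (i * J + a) * x $ (i * J + b))" for i
  define W where "W i = (\<Sum>a<J. (x $ (i * J + a))\<^sup>2)" for i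
  have form: "x \<bullet> (Smat f F m J nb t h *\<^sub>v x) = (\<Sum>i<m. Q i / real (nb (i + 1)))"
    unfolding Smat_quadratic_form[OF x] Q_def ..
  have norm: "x \<bullet> x = (\<Sum>i<m. W i)"
    unfolding scalar_prod_self_eq_sum[OF x] sum_lessThan_mult_eq_sum_blocks W_def ..
  have L_nonneg: "0 \<le> L" if "0 < m"
    using bandwidth[of 1 1] \<open>1 \<le> J\<close> \<open>0 < g\<close> \<open>0 < hl\<close> that by (force simp: L_def)
  have U_nonneg: "0 \<le> U" and W_nonneg: "0 \<le> W i" for i
    using \<open>0 < hl\<close> by (auto simp: U_def W_def intro: sum_nonneg)
  have block: "L * W i \<le> Q i \<and> Q i \<le> U * W i" if "i < m" for i
  proof -
    have i: "i + 1 \<in> {1..m}"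
      using that by simp
    have g1: "g \<le> t (i + 1) 1" and g2: "t (i + 1) J + g \<le> 1"
      and gstep: "\<And>j. 1 \<le> j \<Longrightarrow> j < J \<Longrightarrow> t (i + 1) j + g \<le> t (i + 1) (j + 1)"
      using gaps[OF i] by auto
    have dens_pos: "0 < f (quantile F (t (i + 1) j)) \<and> f (quantile F (t (i + 1) j)) \<le> fmax"
      and dens_lo: "fmin \<le> f (quantile F (t (i + 1) j))"
      and band_pos: "0 < h (i + 1) j \<and> h (i + 1) j \<le> hu" and band_lo: "hl \<le> h (i + 1) j"
      if "j \<in> {1..J}" for j
      using density[OF i that] bandwidth[OF i that] \<open>0 < fmin\<close> \<open>0 < hl\<close> by auto
    show ?thesis
      unfolding L_def U_def W_def Q_def
      using Rmat_quadratic_form_lower[where ti = "t (i + 1)" and hi = "h (i + 1)" and f = f and F = F,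
          OF \<open>1 \<le> J\<close> \<open>0 < g\<close> g1 gstep g2 dens_pos band_pos]
        Rmat_quadratic_form_upper[where ti = "t (i + 1)" and hi = "h (i + 1)" and f = f and F = F,
          OF levels[OF i] dens_lo \<open>0 < fmin\<close> band_lo \<open>0 < hl\<close>]
      by auto
  qed
  have lower: "L / nh * W i \<le> Q i / real (nb (i + 1))"
    and upper: "Q i / real (nb (i + 1)) \<le> U / nl * W i" if "i < m" for i
  proof -
    have n: "nl \<le> real (nb (i + 1))" "real (nb (i + 1)) \<le> nh"
      using size[of "i + 1"] that by auto
    have "L * W i / nh \<le> L * W i / real (nb (i + 1))"
      using n \<open>0 < nl\<close> L_nonneg W_nonneg[of i] that by (intro divide_left_mono) auto
    also have "\<dots> \<le> Q i / real (nb (i + 1))"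
      using block[OF that] by (intro divide_right_mono) auto
    finally show "L / nh * W i \<le> Q i / real (nb (i + 1))"
      by simp
    have "Q i / real (nb (i + 1)) \<le> U * W i / real (nb (i + 1))"
      using block[OF that] by (intro divide_right_mono) auto
    also have "\<dots> \<le> U * W i / nl"
      using n \<open>0 < nl\<close> U_nonneg W_nonneg[of i] by (intro divide_left_mono) auto
    finally show "Q i / real (nb (i + 1)) \<le> U / nl * W i"
      by simp
  qed
  show "g / (4 * hu * fmax\<^sup>2) / nh * (x \<bullet> x) \<le> x \<bullet> (Smat f F m J nb t h *\<^sub>v x)"
    unfolding form norm sum_distrib_left L_def[symmetric] by (intro sum_mono lower) simp
  show "x \<bullet> (Smat f F m J nb t h *\<^sub>v x) \<le> real J / (hl * fmin\<^sup>2) / nl * (x \<bullet> x)"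
    unfolding form norm sum_distrib_left U_def[symmetric] by (intro sum_mono upper) simp
qed

section \<open>Optimal weights as a constrained minimiser\<close>

definition optimal_weight_vec :: "real mat \<Rightarrow> real vec \<Rightarrow> real vec \<Rightarrow> real vec" where
  "optimal_weight_vec S e q =
     (let Si = minv S; d1 = Si *\<^sub>v e; d2 = Si *\<^sub>v q;
          c1 = d2 \<bullet> q; c2 = d2 \<bullet> e; c3 = d1 \<bullet> e
      in (1 / (c1 * c3 - c2\<^sup>2)) \<cdot>\<^sub>v (c1 \<cdot>\<^sub>v d1 - c2 \<cdot>\<^sub>v d2))"

lemma omega_star_eq_optimal_weight_vec:
  "omega_star f F m J nb t h i j =
     optimal_weight_vec (Smat f F m J nb t h) (stackv m J (\<lambda>_ _. 1))
       (stackv m J (\<lambda>a b. quantile F (t a b))) $ ((i - 1) * J + (j - 1))"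
  by (simp add: omega_star_def optimal_weight_vec_def Let_def)

lemma minv_inverse:
  fixes S :: "real mat"
  assumes S: "S \<in> carrier_mat N N"
    and pos_def: "\<And>x. x \<in> carrier_vec N \<Longrightarrow> x \<noteq> 0\<^sub>v N \<Longrightarrow> 0 < x \<bullet> (S *\<^sub>v x)"
  shows "minv S \<in> carrier_mat N N" and "S * minv S = 1\<^sub>m N"
proof -
  have "det S \<noteq> 0"
  proof
    assume "det S = 0"
    then obtain v where "v \<in> carrier_vec N" "v \<noteq> 0\<^sub>v N" "S *\<^sub>v v = 0\<^sub>v N"
      using det_0_iff_vec_prod_zero[OF S] by blast
    with pos_def show False
      by fastforce
  qed
  from det_non_zero_imp_unit[OF S this, of "()"]
  obtain B where B: "B \<in> carrier_mat N N" "S * B = 1\<^sub>m N" "B * S = 1\<^sub>m N"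
    unfolding Units_def ring_mat_def by auto
  have "minv S = B"
    unfolding minv_def
  proof (rule the_equality)
    fix B'
    assume "B' \<in> carrier_mat (dim_row S) (dim_row S) \<and> S * B' = 1\<^sub>m (dim_row S)
      \<and> B' * S = 1\<^sub>m (dim_row S)"
    then have B': "B' \<in> carrier_mat N N" "B' * S = 1\<^sub>m N"
      using S by auto
    have "B' = (B' * S) * B"
      using assoc_mult_mat[OF B'(1) S B(1)] B(2) B'(1) by simp
    then show "B' = B"
      using B'(2) B(1) by simp
  qed (use B S in simp)
  then show "minv S \<in> carrier_mat N N" "S * minv S = 1\<^sub>m N"
    using B by simp_all
qed

text \<open>The Lagrange condition of the constrained minimisation: S applied to the optimal weights
  lies in the span of the constraint vectors, so it is orthogonal to every direction that
  preserves both constraints.\<close>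

lemma optimal_weight_vec_orthogonal:
  fixes S :: "real mat" and e q u :: "real vec"
  assumes S: "S \<in> carrier_mat N N" and Si: "minv S \<in> carrier_mat N N" "S * minv S = 1\<^sub>m N"
    and e: "e \<in> carrier_vec N" and q: "q \<in> carrier_vec N" and u: "u \<in> carrier_vec N"
    and "u \<bullet> e = 0" "u \<bullet> q = 0"
  shows "u \<bullet> (S *\<^sub>v optimal_weight_vec S e q) = 0"
proof -
  have inv: "S *\<^sub>v (minv S *\<^sub>v v) = v" if "v \<in> carrier_vec N" for v
    using S Si that by (simp flip: assoc_mult_mat_vec)
  define c1 where "c1 = (minv S *\<^sub>v q) \<bullet> q"
  define c2 where "c2 = (minv S *\<^sub>v q) \<bullet> e"
  define D where "D = c1 * ((minv S *\<^sub>v e) \<bullet> e) - c2\<^sup>2"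
  have d: "minv S *\<^sub>v e \<in> carrier_vec N" "minv S *\<^sub>v q \<in> carrier_vec N"
    using Si e q by auto
  have "S *\<^sub>v optimal_weight_vec S e q
      = S *\<^sub>v ((1 / D) \<cdot>\<^sub>v (c1 \<cdot>\<^sub>v (minv S *\<^sub>v e) - c2 \<cdot>\<^sub>v (minv S *\<^sub>v q)))"
    by (simp add: optimal_weight_vec_def Let_def c1_def c2_def D_def)
  also have "\<dots> = (1 / D) \<cdot>\<^sub>v (c1 \<cdot>\<^sub>v e - c2 \<cdot>\<^sub>v q)"
    using S d by (simp add: mult_mat_vec mult_minus_distrib_mat_vec inv e q)
  finally show ?thesis
    using assms e q u
    by (simp add: scalar_prod_smult_distrib scalar_prod_minus_distrib)
qed

lemma quadratic_form_pos_of_lower_bound: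
  fixes S :: "real mat" and x :: "real vec"
  assumes "0 < L" and lower: "\<And>x. x \<in> carrier_vec N \<Longrightarrow> L * (x \<bullet> x) \<le> x \<bullet> (S *\<^sub>v x)"
    and x: "x \<in> carrier_vec N"
  shows "0 \<le> x \<bullet> (S *\<^sub>v x)" and "x \<noteq> 0\<^sub>v N \<Longrightarrow> 0 < x \<bullet> (S *\<^sub>v x)"
proof -
  have "0 \<le> x \<bullet> x"
    using x by (simp add: scalar_prod_self_eq_sum sum_nonneg)
  then show "0 \<le> x \<bullet> (S *\<^sub>v x)"
    using lower[OF x] \<open>0 < L\<close> by (meson mult_nonneg_nonneg order_less_imp_le order_trans)
  assume "x \<noteq> 0\<^sub>v N"
  then obtain p where "p < N" "x $ p \<noteq> 0"
    using x by (auto simp: vec_eq_iff)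
  then have "0 < x \<bullet> x"
    using x by (auto simp: scalar_prod_self_eq_sum intro!: sum_pos2)
  then show "0 < x \<bullet> (S *\<^sub>v x)"
    using lower[OF x] \<open>0 < L\<close> by (meson mult_pos_pos order_less_le_trans)
qed

lemma quadratic_form_le_of_orthogonal:
  fixes S :: "real mat" and w v :: "real vec"
  assumes S: "S \<in> carrier_mat N N" and sym: "S\<^sup>T = S"
    and psd: "\<And>x. x \<in> carrier_vec N \<Longrightarrow> 0 \<le> x \<bullet> (S *\<^sub>v x)"
    and w: "w \<in> carrier_vec N" and v: "v \<in> carrier_vec N"
    and orth: "(v - w) \<bullet> (S *\<^sub>v w) = 0"
  shows "w \<bullet> (S *\<^sub>v w) \<le> v \<bullet> (S *\<^sub>v v)"
proof -
  define u where "u = v - w"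
  have u: "u \<in> carrier_vec N" and v_eq: "v = w + u"
    using v w by (auto simp: u_def)
  have "w \<bullet> (S *\<^sub>v u) = (S *\<^sub>v w) \<bullet> u"
    using transpose_vec_mult_scalar[OF S u w] sym by simp
  also have "\<dots> = 0"
    using orth u w S comm_scalar_prod[of u N "S *\<^sub>v w"] by (simp add: u_def)
  finally have cross: "w \<bullet> (S *\<^sub>v u) = 0" .
  have "v \<bullet> (S *\<^sub>v v) = w \<bullet> (S *\<^sub>v w) + (w \<bullet> (S *\<^sub>v u) + u \<bullet> (S *\<^sub>v w)) + u \<bullet> (S *\<^sub>v u)"
    using S u w unfolding v_eq
    by (simp add: mult_add_distrib_mat_vec scalar_prod_add_distrib add_scalar_prod_distrib)
  then show ?thesis
    using cross orth psd[OF u] by (simp add: u_def)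
qed

section \<open>Feasible weights of small norm\<close>

lemma pair_sum_sq_diff:
  fixes q :: "nat \<Rightarrow> real"
  shows "(\<Sum>p<N. \<Sum>p'<N. (q p - q p')\<^sup>2) = 2 * real N * (\<Sum>p<N. (q p)\<^sup>2) - 2 * (\<Sum>p<N. q p)\<^sup>2"
  by (simp add: power2_diff sum.distrib sum_subtractf sum_distrib_left sum_distrib_right
      power2_eq_square sum_product algebra_simps)

lemma pair_sum_sq_diff_eq_variance:
  fixes q :: "nat \<Rightarrow> real"
  assumes "0 < N"
  shows "(\<Sum>p<N. \<Sum>p'<N. (q p - q p')\<^sup>2)
       = 2 * real N * (\<Sum>p<N. (q p - (\<Sum>p<N. q p) / real N)\<^sup>2)"
proof -
  define m where "m = (\<Sum>p<N. q p) / real N"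
  have "(\<Sum>p<N. (q p - m)\<^sup>2) = (\<Sum>p<N. (q p)\<^sup>2) - 2 * m * (\<Sum>p<N. q p) + real N * m\<^sup>2"
    by (simp add: power2_diff sum.distrib sum_subtractf sum_distrib_left[symmetric]
        sum_distrib_right[symmetric] mult.assoc mult.commute)
  also have "\<dots> = (\<Sum>p<N. (q p)\<^sup>2) - (\<Sum>p<N. q p)\<^sup>2 / real N"
    using assms by (simp add: m_def power2_eq_square field_simps)
  finally show ?thesis
    unfolding pair_sum_sq_diff m_def[symmetric] using assms by (simp add: field_simps)
qed

lemma centered_weights_sums:
  fixes q v :: "nat \<Rightarrow> real" and N :: nat and m V :: real
  assumes "0 < N" and m_def: "m = (\<Sum>p<N. q p) / real N"
    and V_def: "V = (\<Sum>p<N. (q p - m)\<^sup>2)" and "0 < V"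
    and v_def: "\<And>p. v p = 1 / real N - m / V * (q p - m)"
  shows "(\<Sum>p<N. v p) = 1" and "(\<Sum>p<N. v p * q p) = 0"
    and "(\<Sum>p<N. (v p)\<^sup>2) = 1 / real N + m\<^sup>2 / V"
proof -
  define k where "k = m / V"
  have N: "0 < real N"
    using \<open>0 < N\<close> by simp
  have k_centered: "(\<Sum>p<N. k * (q p - m)) = 0"
    using N by (simp add: sum_distrib_left[symmetric] sum_subtractf m_def)
  have "(\<Sum>p<N. (q p - m) * q p) = (\<Sum>p<N. (q p - m)\<^sup>2) + m * (\<Sum>p<N. q p - m)"
    by (simp add: sum_distrib_left sum.distrib[symmetric] power2_eq_square algebra_simps)
  then have "(\<Sum>p<N. (q p - m) * q p) = V"
    using N by (simp add: V_def sum_subtractf m_def)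
  moreover have "v p * q p = q p / real N - k * ((q p - m) * q p)" for p
    by (simp add: v_def k_def algebra_simps)
  ultimately have "(\<Sum>p<N. v p * q p) = (\<Sum>p<N. q p) / real N - k * V"
    by (simp add: sum_subtractf sum_divide_distrib sum_distrib_left[symmetric])
  then show "(\<Sum>p<N. v p * q p) = 0"
    using \<open>0 < V\<close> by (simp add: k_def m_def)
  have "(\<Sum>p<N. v p) = (\<Sum>p<N. 1 / real N) - (\<Sum>p<N. k * (q p - m))"
    unfolding v_def k_def by (rule sum_subtractf)
  then show "(\<Sum>p<N. v p) = 1"
    using N k_centered by simp
  have pointwise: "(v p)\<^sup>2 = 1 / (real N)\<^sup>2 - 2 / real N * (k * (q p - m)) + k\<^sup>2 * (q p - m)\<^sup>2"
    for p
    by (simp add: v_def k_def power2_eq_square algebra_simps)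
  have "(\<Sum>p<N. (v p)\<^sup>2)
      = (\<Sum>p<N. 1 / (real N)\<^sup>2) - 2 / real N * (\<Sum>p<N. k * (q p - m)) + k\<^sup>2 * V"
    unfolding pointwise sum.distrib sum_subtractf sum_distrib_left[symmetric] V_def ..
  then show "(\<Sum>p<N. (v p)\<^sup>2) = 1 / real N + m\<^sup>2 / V"
    using N \<open>0 < V\<close> k_centered by (simp add: k_def power2_eq_square)
qed

lemma exists_feasible_weights_small_norm:
  fixes q :: "nat \<Rightarrow> real"
  assumes "0 < N" and bound: "\<And>p. p < N \<Longrightarrow> \<bar>q p\<bar> \<le> Q" and "0 < \<kappa>"
    and spread: "\<kappa> * (real N)\<^sup>2 \<le> (\<Sum>p<N. \<Sum>p'<N. (q p - q p')\<^sup>2)"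
  obtains v where "(\<Sum>p<N. v p) = 1" "(\<Sum>p<N. v p * q p) = 0"
    "(\<Sum>p<N. (v p)\<^sup>2) \<le> (1 + 2 * Q\<^sup>2 / \<kappa>) / real N"
proof -
  define m where "m = (\<Sum>p<N. q p) / real N"
  define V where "V = (\<Sum>p<N. (q p - m)\<^sup>2)"
  have N: "0 < real N"
    using \<open>0 < N\<close> by simp
  have "real N * (\<kappa> * real N) \<le> real N * (2 * V)"
    using spread pair_sum_sq_diff_eq_variance[OF \<open>0 < N\<close>, of q]
    by (simp add: V_def m_def power2_eq_square mult_ac)
  then have V_ge: "\<kappa> * real N / 2 \<le> V"
    using N by (simp add: mult_le_cancel_left_pos)
  moreover have "0 < \<kappa> * real N / 2"
    using \<open>0 < \<kappa>\<close> N by simp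
  ultimately have "0 < V"
    by linarith
  have "\<bar>\<Sum>p<N. q p\<bar> \<le> (\<Sum>p<N. \<bar>q p\<bar>)"
    by (rule sum_abs)
  also have "\<dots> \<le> real N * Q"
    using sum_mono[of "{..<N}" "\<lambda>p. \<bar>q p\<bar>" "\<lambda>_. Q"] bound by simp
  finally have "\<bar>m\<bar> \<le> Q"
    using N by (simp add: m_def pos_divide_le_eq mult.commute)
  then have "m\<^sup>2 / V \<le> Q\<^sup>2 / (\<kappa> * real N / 2)"
    using V_ge \<open>0 < \<kappa>\<close> N
    by (intro frac_le) (auto simp: abs_le_square_iff[symmetric] intro: abs_ge_zero)
  then have "1 / real N + m\<^sup>2 / V \<le> (1 + 2 * Q\<^sup>2 / \<kappa>) / real N"
    by (simp add: add_divide_distrib mult.commute)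
  with centered_weights_sums[OF \<open>0 < N\<close> m_def V_def \<open>0 < V\<close>, of "\<lambda>p. 1 / real N - m / V * (q p - m)"]
  show ?thesis
    using that by auto
qed

section \<open>The grid of quantile levels\<close>

lemma tau_grid_Suc:
  assumes "1 \<le> m" "1 \<le> J"
  shows "tau_grid m J dt tb i (Suc j) = tau_grid m J dt tb i j + dt / real J"
  using assms unfolding tau_grid_def by (simp add: field_simps)

text \<open>In the grid of quantile levels the batch index varies fastest: the level at stacked
  position p is an affine function of its rank p div J + m * (p mod J), and this rank is a
  permutation of the positions.\<close>

lemma bij_betw_interleave:
  fixes m J :: nat
  shows "bij_betw (\<lambda>p. p div J + m * (p mod J)) {..<m * J} {..<m * J}"
proof -
  let ?r = "\<lambda>p. p div J + m * (p mod J)"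
  have bounds: "p div J < m" "p mod J < J" if "p < m * J" for p
  proof -
    have "0 < J"
      using that by (cases J) auto
    then show "p div J < m" "p mod J < J"
      using that by (simp_all add: div_less_iff_less_mult mult.commute)
  qed
  have "?r p < m * J" if "p < m * J" for p
  proof -
    have "?r p < m + m * (p mod J)"
      using bounds[OF that] by simp
    also have "\<dots> = m * Suc (p mod J)"
      by simp
    also have "\<dots> \<le> m * J"
      using bounds[OF that] by (intro mult_left_mono) auto
    finally show ?thesis .
  qed
  moreover have "inj_on ?r {..<m * J}"
  proof (rule inj_onI)
    fix p p'
    assume "p \<in> {..<m * J}" "p' \<in> {..<m * J}" and eq: "?r p = ?r p'"
    then have "p div J < m" "p' div J < m"
      using bounds by auto
    then have "p div J = p' div J" "p mod J = p' mod J"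
      using arg_cong[OF eq, of "\<lambda>x. x mod m"] arg_cong[OF eq, of "\<lambda>x. x div m"] by auto
    then show "p = p'"
      by (metis div_mult_mod_eq)
  qed
  ultimately show ?thesis
    using endo_inj_surj[of "{..<m * J}" ?r] by (auto simp: bij_betw_def)
qed

lemma pair_sum_sq_diff_nat:
  "(\<Sum>p<N. \<Sum>p'<N. (real p - real p')\<^sup>2) = (real N)\<^sup>2 * ((real N)\<^sup>2 - 1) / 6"
proof -
  have sum_id: "(\<Sum>p<N. real p) = real N * (real N - 1) / 2"
    by (induction N) (auto simp: field_simps)
  have sum_sq: "(\<Sum>p<N. (real p)\<^sup>2) = (real N - 1) * real N * (2 * real N - 1) / 6"
    by (induction N) (auto simp: field_simps power2_eq_square)
  show ?thesis
    unfolding pair_sum_sq_diff[of "\<lambda>p. real p"] sum_id sum_sq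
    by (simp add: field_simps power2_eq_square)
qed

lemma tau_grid_pair_sum_sq:
  fixes m J :: nat and dt tb :: real
  defines "t \<equiv> \<lambda>p. tau_grid m J dt tb (Suc (p div J)) (Suc (p mod J))"
  assumes "1 \<le> m" "1 \<le> J"
  shows "(\<Sum>p<m * J. \<Sum>p'<m * J. (t p - t p')\<^sup>2) = dt\<^sup>2 * ((real (m * J))\<^sup>2 - 1) / 6"
proof -
  let ?r = "\<lambda>p. p div J + m * (p mod J)"
  have diff: "t p - t p' = dt / real (m * J) * (real (?r p) - real (?r p'))" for p p'
    using assms unfolding t_def tau_grid_def by (simp add: field_simps)
  have b: "bij_betw ?r {..<m * J} {..<m * J}"
    by (rule bij_betw_interleave)
  have "(\<Sum>p<m * J. \<Sum>p'<m * J. (real (?r p) - real (?r p'))\<^sup>2)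
      = (\<Sum>p<m * J. \<Sum>p'<m * J. (real (?r p) - real p')\<^sup>2)"
    by (rule sum.cong[OF refl], rule sum.reindex_bij_betw[OF b])
  also have "\<dots> = (\<Sum>p<m * J. \<Sum>p'<m * J. (real p - real p')\<^sup>2)"
    by (rule sum.reindex_bij_betw[OF b, of "\<lambda>p. \<Sum>p'<m * J. (real p - real p')\<^sup>2"])
  finally have rank_sum: "(\<Sum>p<m * J. \<Sum>p'<m * J. (real (?r p) - real (?r p'))\<^sup>2)
      = (real (m * J))\<^sup>2 * ((real (m * J))\<^sup>2 - 1) / 6"
    unfolding pair_sum_sq_diff_nat .
  show ?thesis
    unfolding diff power_mult_distrib sum_distrib_left[symmetric] rank_sum
    using assms by (simp add: power_divide)
qed

section \<open>Bounds for one configuration of batches\<close>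

lemma sum_grid_eq_sum_stacked:
  fixes G :: "nat \<Rightarrow> nat \<Rightarrow> 'a::comm_monoid_add"
  shows "(\<Sum>i=1..m. \<Sum>j=1..J. G i j) = (\<Sum>p<m * J. G (Suc (p div J)) (Suc (p mod J)))"
proof -
  have "(\<Sum>p<m * J. G (Suc (p div J)) (Suc (p mod J)))
      = (\<Sum>i<m. \<Sum>a<J. G (Suc ((i * J + a) div J)) (Suc ((i * J + a) mod J)))"
    by (rule sum_lessThan_mult_eq_sum_blocks)
  also have "\<dots> = (\<Sum>i<m. \<Sum>a<J. G (Suc i) (Suc a))"
    by (intro sum.cong refl) simp
  finally show ?thesis
    by (simp add: sum.atLeast1_atMost_eq)
qed

lemma stacked_index_in_grid:
  fixes m J p :: nat
  assumes "p < m * J"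
  shows "Suc (p div J) \<in> {1..m}" and "Suc (p mod J) \<in> {1..J}"
proof -
  have "0 < J"
    using assms by (cases J) auto
  then show "Suc (p div J) \<in> {1..m}" "Suc (p mod J) \<in> {1..J}"
    using assms by (simp_all add: div_less_iff_less_mult mult.commute Suc_le_eq)
qed

lemma omega_star_sum_sq_le:
  fixes f F :: "real \<Rightarrow> real" and m J :: nat and nb :: "nat \<Rightarrow> nat"
    and t h :: "nat \<Rightarrow> nat \<Rightarrow> real" and v :: "nat \<Rightarrow> real" and L U :: real
  defines "S \<equiv> Smat f F m J nb t h"
    and "w \<equiv> omega_star f F m J nb t h"
    and "q \<equiv> \<lambda>p. quantile F (t (Suc (p div J)) (Suc (p mod J)))"
  assumes "0 < L"
    and lower: "\<And>x. x \<in> carrier_vec (m * J) \<Longrightarrow> L * (x \<bullet> x) \<le> x \<bullet> (S *\<^sub>v x)"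
    and upper: "\<And>x. x \<in> carrier_vec (m * J) \<Longrightarrow> x \<bullet> (S *\<^sub>v x) \<le> U * (x \<bullet> x)"
    and w_sum: "(\<Sum>i=1..m. \<Sum>j=1..J. w i j) = 1"
    and w_sum_q: "(\<Sum>i=1..m. \<Sum>j=1..J. w i j * quantile F (t i j)) = 0"
    and v_sum: "(\<Sum>p<m * J. v p) = 1" and v_sum_q: "(\<Sum>p<m * J. v p * q p) = 0"
  shows "(\<Sum>i=1..m. \<Sum>j=1..J. (w i j)\<^sup>2) \<le> U / L * (\<Sum>p<m * J. (v p)\<^sup>2)"
proof -
  define N where "N = m * J"
  define e where "e = stackv m J (\<lambda>_ _. 1)"
  define qv where "qv = stackv m J (\<lambda>a b. quantile F (t a b))"
  define W where "W = optimal_weight_vec S e qv"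
  define V where "V = vec N v"
  have S: "S \<in> carrier_mat N N" and S_sym: "S\<^sup>T = S"
    unfolding S_def N_def by (rule Smat_carrier, rule transpose_Smat)
  have vecs: "e \<in> carrier_vec N" "qv \<in> carrier_vec N" "V \<in> carrier_vec N"
    unfolding e_def qv_def V_def stackv_def N_def by auto
  have lower': "L * (x \<bullet> x) \<le> x \<bullet> (S *\<^sub>v x)" if "x \<in> carrier_vec N" for x
    using lower that unfolding N_def .
  have psd: "0 \<le> x \<bullet> (S *\<^sub>v x)" if "x \<in> carrier_vec N" for x
    by (rule quadratic_form_pos_of_lower_bound(1)[OF \<open>0 < L\<close> lower' that])
  have pos_def: "0 < x \<bullet> (S *\<^sub>v x)" if "x \<in> carrier_vec N" "x \<noteq> 0\<^sub>v N" for x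
    by (rule quadratic_form_pos_of_lower_bound(2)[OF \<open>0 < L\<close> lower' that])
  note Si = minv_inverse[OF S pos_def]
  have W: "W \<in> carrier_vec N"
    using Si vecs by (simp add: W_def optimal_weight_vec_def Let_def)
  have w_eq: "w (Suc (p div J)) (Suc (p mod J)) = W $ p" for p
    by (simp add: w_def W_def S_def e_def qv_def omega_star_eq_optimal_weight_vec)
  have sum_stacked: "(\<Sum>p<N. G (W $ p) (e $ p) (qv $ p))
      = (\<Sum>i=1..m. \<Sum>j=1..J. G (w i j) 1 (quantile F (t i j)))" for G
    unfolding sum_grid_eq_sum_stacked N_def
    by (intro sum.cong refl) (simp add: w_eq e_def qv_def stackv_def)
  have "W \<bullet> e = 1" "W \<bullet> qv = 0" "V \<bullet> e = 1" "V \<bullet> qv = 0"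
    using sum_stacked[of "\<lambda>x _ _. x"] sum_stacked[of "\<lambda>x _ y. x * y"] w_sum w_sum_q
      v_sum v_sum_q vecs W
    by (auto simp: scalar_prod_def atLeast0LessThan V_def N_def e_def qv_def q_def stackv_def)
  then have "(V - W) \<bullet> e = 0" "(V - W) \<bullet> qv = 0"
    using vecs W by (simp_all add: minus_scalar_prod_distrib)
  then have "(V - W) \<bullet> (S *\<^sub>v W) = 0"
    unfolding W_def using vecs W
    by (intro optimal_weight_vec_orthogonal[OF S Si]) (simp_all add: W_def)
  then have "W \<bullet> (S *\<^sub>v W) \<le> V \<bullet> (S *\<^sub>v V)"
    using quadratic_form_le_of_orthogonal[OF S S_sym psd W vecs(3)] by simp
  then have "L * (W \<bullet> W) \<le> U * (V \<bullet> V)"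
    using lower[of W] upper[of V] W vecs unfolding N_def by linarith
  then have "W \<bullet> W \<le> U / L * (V \<bullet> V)"
    using \<open>0 < L\<close> by (simp add: field_simps)
  moreover have "W \<bullet> W = (\<Sum>i=1..m. \<Sum>j=1..J. (w i j)\<^sup>2)"
    using sum_stacked[of "\<lambda>x _ _. x\<^sup>2"] W by (simp add: scalar_prod_self_eq_sum)
  moreover have "V \<bullet> V = (\<Sum>p<m * J. (v p)\<^sup>2)"
    using vecs by (simp add: scalar_prod_self_eq_sum V_def N_def)
  ultimately show ?thesis
    by simp
qed

lemma quantile_tau_grid_spread:
  fixes F :: "real \<Rightarrow> real" and m J :: nat and dt tb \<delta> a b fmax :: real
  defines "q \<equiv> \<lambda>p. quantile F (tau_grid m J dt tb (Suc (p div J)) (Suc (p mod J)))"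
  assumes "1 \<le> m" "1 \<le> J" "2 \<le> m * J" "0 < fmax"
    and quantile: "\<And>\<tau>. \<delta> < \<tau> \<Longrightarrow> \<tau> < 1 - \<delta> \<Longrightarrow> quantile F \<tau> \<in> {a..b} \<and> F (quantile F \<tau>) = \<tau>"
    and lipschitz: "fmax-lipschitz_on {a..b} F"
    and levels: "\<And>i j. i \<in> {1..m} \<Longrightarrow> j \<in> {1..J} \<Longrightarrow>
                  \<delta> < tau_grid m J dt tb i j \<and> tau_grid m J dt tb i j < 1 - \<delta>"
  shows "dt\<^sup>2 / (8 * fmax\<^sup>2) * (real (m * J))\<^sup>2 \<le> (\<Sum>p<m * J. \<Sum>p'<m * J. (q p - q p')\<^sup>2)"
proof -
  define t where "t p = tau_grid m J dt tb (Suc (p div J)) (Suc (p mod J))" for p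
  have "F (q p) = t p" "q p \<in> {a..b}" if "p < m * J" for p
    using quantile levels[OF stacked_index_in_grid[OF that]] by (simp_all add: q_def t_def)
  then have "(t p - t p')\<^sup>2 \<le> fmax\<^sup>2 * (q p - q p')\<^sup>2" if "p < m * J" "p' < m * J" for p p'
  proof -
    have "\<bar>t p - t p'\<bar> \<le> fmax * \<bar>q p - q p'\<bar>"
      using lipschitz_onD[OF lipschitz, of "q p" "q p'"] that \<open>\<And>p. p < m * J \<Longrightarrow> F (q p) = t p\<close>
        \<open>\<And>p. p < m * J \<Longrightarrow> q p \<in> {a..b}\<close>
      by (simp add: dist_real_def)
    then have "\<bar>t p - t p'\<bar>\<^sup>2 \<le> (fmax * \<bar>q p - q p'\<bar>)\<^sup>2"
      by (rule power_mono) simp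
    then show ?thesis
      by (simp add: power_mult_distrib)
  qed
  then have "(\<Sum>p<m * J. \<Sum>p'<m * J. (t p - t p')\<^sup>2)
      \<le> (\<Sum>p<m * J. \<Sum>p'<m * J. fmax\<^sup>2 * (q p - q p')\<^sup>2)"
    by (intro sum_mono) auto
  then have "dt\<^sup>2 * ((real (m * J))\<^sup>2 - 1) / 6 \<le> fmax\<^sup>2 * (\<Sum>p<m * J. \<Sum>p'<m * J. (q p - q p')\<^sup>2)"
    using tau_grid_pair_sum_sq[OF \<open>1 \<le> m\<close> \<open>1 \<le> J\<close>, of dt tb]
    by (simp add: t_def sum_distrib_left)
  moreover have "(real (m * J))\<^sup>2 / 8 \<le> ((real (m * J))\<^sup>2 - 1) / 6"
  proof -
    have "(2::real) \<le> real (m * J)"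
      using \<open>2 \<le> m * J\<close> by linarith
    from power_mono[OF this, of 2] show ?thesis
      by simp
  qed
  then have "dt\<^sup>2 * ((real (m * J))\<^sup>2 / 8) \<le> dt\<^sup>2 * (((real (m * J))\<^sup>2 - 1) / 6)"
    by (rule mult_left_mono) simp
  ultimately have "dt\<^sup>2 * ((real (m * J))\<^sup>2 / 8) \<le> fmax\<^sup>2 * (\<Sum>p<m * J. \<Sum>p'<m * J. (q p - q p')\<^sup>2)"
    by simp
  moreover have "0 < fmax\<^sup>2"
    using \<open>0 < fmax\<close> by simp
  ultimately show ?thesis
    by (simp add: field_simps)
qed

lemma tau_grid_gaps:
  fixes m J :: nat and dt tb \<delta> :: real
  defines "t \<equiv> tau_grid m J dt tb" and "g \<equiv> min \<delta> (dt / real J)"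
  assumes "1 \<le> m" "1 \<le> J" and "i \<in> {1..m}"
    and levels: "\<And>j. j \<in> {1..J} \<Longrightarrow> \<delta> < t i j \<and> t i j < 1 - \<delta>"
  shows "g \<le> t i 1 \<and> t i J + g \<le> 1 \<and> (\<forall>j. 1 \<le> j \<longrightarrow> j < J \<longrightarrow> t i j + g \<le> t i (j + 1))"
  using levels[of 1] levels[of J] tau_grid_Suc[OF \<open>1 \<le> m\<close> \<open>1 \<le> J\<close>] \<open>1 \<le> J\<close>
  by (auto simp: t_def g_def)

lemma Smat_tau_grid_quadratic_form_bounds:
  fixes f F :: "real \<Rightarrow> real" and m J :: nat and nb :: "nat \<Rightarrow> nat"
    and h :: "nat \<Rightarrow> nat \<Rightarrow> real" and x :: "real vec" and dt tb \<delta> :: real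
  defines "t \<equiv> tau_grid m J dt tb" and "g \<equiv> min \<delta> (dt / real J)"
  assumes "1 \<le> m" "1 \<le> J" "0 < dt" "0 < \<delta>" "0 < fmin"
    and quantile: "\<And>\<tau>. \<delta> < \<tau> \<Longrightarrow> \<tau> < 1 - \<delta> \<Longrightarrow> quantile F \<tau> \<in> {a..b}"
    and density: "\<And>u. u \<in> {a..b} \<Longrightarrow> fmin \<le> f u \<and> f u \<le> fmax"
    and levels: "\<And>i j. i \<in> {1..m} \<Longrightarrow> j \<in> {1..J} \<Longrightarrow> \<delta> < t i j \<and> t i j < 1 - \<delta>"
    and bandwidth: "\<And>i j. i \<in> {1..m} \<Longrightarrow> j \<in> {1..J} \<Longrightarrow> hl \<le> h i j \<and> h i j \<le> hu"
    and "0 < hl"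
    and size: "\<And>i. i \<in> {1..m} \<Longrightarrow> P \<le> real (nb i) \<and> real (nb i) \<le> \<rho> * P" and "0 < P"
    and "x \<in> carrier_vec (m * J)"
  shows "g / (4 * hu * fmax\<^sup>2) / (\<rho> * P) * (x \<bullet> x) \<le> x \<bullet> (Smat f F m J nb t h *\<^sub>v x)"
    and "x \<bullet> (Smat f F m J nb t h *\<^sub>v x) \<le> real J / (hl * fmin\<^sup>2) / P * (x \<bullet> x)"
proof -
  have "0 < g"
    using \<open>0 < \<delta>\<close> \<open>0 < dt\<close> \<open>1 \<le> J\<close> by (simp add: g_def)
  have gaps: "g \<le> t i 1 \<and> t i J + g \<le> 1 \<and> (\<forall>j. 1 \<le> j \<longrightarrow> j < J \<longrightarrow> t i j + g \<le> t i (j + 1))"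
    if "i \<in> {1..m}" for i
    using tau_grid_gaps[OF \<open>1 \<le> m\<close> \<open>1 \<le> J\<close> that, of \<delta> dt tb] levels[OF that]
    unfolding t_def g_def by blast
  have "quantile F (t i j) \<in> {a..b}" and unit: "0 < t i j \<and> t i j < 1"
    if "i \<in> {1..m}" "j \<in> {1..J}" for i j
    using levels[OF that] quantile[of "t i j"] \<open>0 < \<delta>\<close> by auto
  note bounds = Smat_quadratic_form_bounds[where t = t and h = h and nb = nb and f = f and F = F
      and m = m, OF \<open>1 \<le> J\<close> \<open>0 < g\<close> gaps unit density[OF this(1)] \<open>0 < fmin\<close> bandwidth
      \<open>0 < hl\<close> size \<open>0 < P\<close> \<open>x \<in> carrier_vec (m * J)\<close>]
  then show "g / (4 * hu * fmax\<^sup>2) / (\<rho> * P) * (x \<bullet> x) \<le> x \<bullet> (Smat f F m J nb t h *\<^sub>v x)"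
    and "x \<bullet> (Smat f F m J nb t h *\<^sub>v x) \<le> real J / (hl * fmin\<^sup>2) / P * (x \<bullet> x)"
    by simp_all
qed

lemma exists_feasible_weights_tau_grid:
  fixes F :: "real \<Rightarrow> real" and m J :: nat and dt tb :: real
  defines "q \<equiv> \<lambda>p. quantile F (tau_grid m J dt tb (Suc (p div J)) (Suc (p mod J)))"
  assumes "1 \<le> m" "1 \<le> J" "2 \<le> m * J" "0 < dt" "0 < fmax"
    and quantile: "\<And>\<tau>. \<delta> < \<tau> \<Longrightarrow> \<tau> < 1 - \<delta> \<Longrightarrow> quantile F \<tau> \<in> {a..b} \<and> F (quantile F \<tau>) = \<tau>"
    and lipschitz: "fmax-lipschitz_on {a..b} F"
    and levels: "\<And>i j. i \<in> {1..m} \<Longrightarrow> j \<in> {1..J} \<Longrightarrow>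
                  \<delta> < tau_grid m J dt tb i j \<and> tau_grid m J dt tb i j < 1 - \<delta>"
  obtains v where "(\<Sum>p<m * J. v p) = 1" "(\<Sum>p<m * J. v p * q p) = 0"
    "(\<Sum>p<m * J. (v p)\<^sup>2) \<le> (1 + 16 * fmax\<^sup>2 * (max \<bar>a\<bar> \<bar>b\<bar>)\<^sup>2 / dt\<^sup>2) / real (m * J)"
proof -
  have "0 < m * J"
    using \<open>1 \<le> m\<close> \<open>1 \<le> J\<close> by simp
  moreover have "\<bar>q p\<bar> \<le> max \<bar>a\<bar> \<bar>b\<bar>" if "p < m * J" for p
  proof -
    have "q p \<in> {a..b}"
      using quantile levels[OF stacked_index_in_grid[OF that]] unfolding q_def by blast
    then show ?thesis
      by auto
  qed
  moreover have "0 < dt\<^sup>2 / (8 * fmax\<^sup>2)"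
    using \<open>0 < fmax\<close> \<open>0 < dt\<close> by simp
  moreover have "dt\<^sup>2 / (8 * fmax\<^sup>2) * (real (m * J))\<^sup>2 \<le> (\<Sum>p<m * J. \<Sum>p'<m * J. (q p - q p')\<^sup>2)"
    unfolding q_def
    by (rule quantile_tau_grid_spread[OF \<open>1 \<le> m\<close> \<open>1 \<le> J\<close> \<open>2 \<le> m * J\<close> \<open>0 < fmax\<close> quantile
          lipschitz levels])
  ultimately obtain v where "(\<Sum>p<m * J. v p) = 1" "(\<Sum>p<m * J. v p * q p) = 0"
    "(\<Sum>p<m * J. (v p)\<^sup>2) \<le> (1 + 2 * (max \<bar>a\<bar> \<bar>b\<bar>)\<^sup>2 / (dt\<^sup>2 / (8 * fmax\<^sup>2))) / real (m * J)"
    by (rule exists_feasible_weights_small_norm)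
  then show ?thesis
    using that by (simp add: mult_ac)
qed

lemma omega_star_sum_sq_bound:
  fixes f F :: "real \<Rightarrow> real" and m J :: nat and nb :: "nat \<Rightarrow> nat"
    and h :: "nat \<Rightarrow> nat \<Rightarrow> real" and dt tb \<delta> a b fmin fmax c C H P \<rho> :: real
  defines "t \<equiv> tau_grid m J dt tb"
    and "w \<equiv> omega_star f F m J nb (tau_grid m J dt tb) h"
    and "K \<equiv> max 1 (4 * real J * C * \<rho> * fmax\<^sup>2 / (c * fmin\<^sup>2 * min \<delta> (dt / real J))
                     * (1 + 16 * fmax\<^sup>2 * (max \<bar>a\<bar> \<bar>b\<bar>)\<^sup>2 / dt\<^sup>2))"
  assumes "1 \<le> m" "1 \<le> J" "0 < dt" "0 < \<delta>" "a \<le> b"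
    and quantile: "\<And>\<tau>. \<delta> < \<tau> \<Longrightarrow> \<tau> < 1 - \<delta> \<Longrightarrow> quantile F \<tau> \<in> {a..b} \<and> F (quantile F \<tau>) = \<tau>"
    and density: "\<And>u. u \<in> {a..b} \<Longrightarrow> fmin \<le> f u \<and> f u \<le> fmax" and "0 < fmin"
    and lipschitz: "fmax-lipschitz_on {a..b} F"
    and levels: "\<And>i j. i \<in> {1..m} \<Longrightarrow> j \<in> {1..J} \<Longrightarrow> \<delta> < t i j \<and> t i j < 1 - \<delta>"
    and w_sum: "(\<Sum>i=1..m. \<Sum>j=1..J. w i j) = 1"
    and w_sum_q: "(\<Sum>i=1..m. \<Sum>j=1..J. w i j * quantile F (t i j)) = 0"
    and bandwidth: "\<And>i j. i \<in> {1..m} \<Longrightarrow> j \<in> {1..J} \<Longrightarrow> c * H \<le> h i j \<and> h i j \<le> C * H"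
    and "0 < c" "0 < H"
    and size: "\<And>i. i \<in> {1..m} \<Longrightarrow> P \<le> real (nb i) \<and> real (nb i) \<le> \<rho> * P" and "0 < P"
  shows "(\<Sum>i=1..m. \<Sum>j=1..J. (w i j)\<^sup>2) \<le> K / real m"
proof (cases "m * J = 1")
  case True
  then show ?thesis
    using w_sum by (simp add: K_def)
next
  case False
  then have "2 \<le> m * J"
    using \<open>1 \<le> m\<close> \<open>1 \<le> J\<close> by (metis One_nat_def less_2_cases_iff linorder_not_le mult_is_0
        not_one_le_zero)
  define g where "g = min \<delta> (dt / real J)"
  define L where "L = g / (4 * (C * H) * fmax\<^sup>2) / (\<rho> * P)"
  define U where "U = real J / ((c * H) * fmin\<^sup>2) / P"
  define R where "R = 1 + 16 * fmax\<^sup>2 * (max \<bar>a\<bar> \<bar>b\<bar>)\<^sup>2 / dt\<^sup>2"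
  have "0 < fmax" "0 < g" "0 < c * H" "0 \<le> R"
    using density[of a] \<open>a \<le> b\<close> \<open>0 < fmin\<close> \<open>0 < \<delta>\<close> \<open>0 < dt\<close> \<open>1 \<le> J\<close> \<open>0 < c\<close> \<open>0 < H\<close>
    by (auto simp: g_def R_def)
  have "P \<le> \<rho> * P"
    using size[of 1] \<open>1 \<le> m\<close> by auto
  then have "0 < \<rho>"
    using \<open>0 < P\<close> by (simp add: mult_le_cancel_right1)
  have "0 < C * H"
    using bandwidth[of 1 1] \<open>1 \<le> m\<close> \<open>1 \<le> J\<close> \<open>0 < c * H\<close> by auto
  then have "0 < L"
    using \<open>0 < g\<close> \<open>0 < fmax\<close> \<open>0 < \<rho>\<close> \<open>0 < P\<close> by (simp add: L_def)
  have quantile_in: "quantile F \<tau> \<in> {a..b}" if "\<delta> < \<tau>" "\<tau> < 1 - \<delta>" for \<tau>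
    using quantile[OF that] by blast
  have quad_lower: "L * (x \<bullet> x) \<le> x \<bullet> (Smat f F m J nb t h *\<^sub>v x)"
    and quad_upper: "x \<bullet> (Smat f F m J nb t h *\<^sub>v x) \<le> U * (x \<bullet> x)"
    if "x \<in> carrier_vec (m * J)" for x
    using Smat_tau_grid_quadratic_form_bounds[where hl = "c * H" and hu = "C * H",
        OF \<open>1 \<le> m\<close> \<open>1 \<le> J\<close> \<open>0 < dt\<close> \<open>0 < \<delta>\<close> \<open>0 < fmin\<close> quantile_in density
        levels[unfolded t_def] bandwidth \<open>0 < c * H\<close> size \<open>0 < P\<close> that]
    unfolding L_def U_def g_def t_def by (simp_all add: mult.assoc)
  obtain v where v: "(\<Sum>p<m * J. v p) = 1"
      "(\<Sum>p<m * J. v p * quantile F (t (Suc (p div J)) (Suc (p mod J)))) = 0"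
      "(\<Sum>p<m * J. (v p)\<^sup>2) \<le> R / real (m * J)"
    using exists_feasible_weights_tau_grid[OF \<open>1 \<le> m\<close> \<open>1 \<le> J\<close> \<open>2 \<le> m * J\<close> \<open>0 < dt\<close>
        \<open>0 < fmax\<close> quantile lipschitz levels[unfolded t_def]]
    unfolding t_def R_def by blast
  have "(\<Sum>i=1..m. \<Sum>j=1..J. (w i j)\<^sup>2) \<le> U / L * (\<Sum>p<m * J. (v p)\<^sup>2)"
    unfolding w_def t_def[symmetric]
    by (rule omega_star_sum_sq_le[OF \<open>0 < L\<close> quad_lower quad_upper
          w_sum[unfolded w_def t_def[symmetric]] w_sum_q[unfolded w_def t_def[symmetric]] v(1,2)])
      (use quantile in auto)
  also have "\<dots> \<le> U / L * (R / real (m * J))"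
    using v(3) \<open>0 < L\<close> \<open>0 < fmin\<close> \<open>0 < c * H\<close> \<open>0 < P\<close> by (intro mult_left_mono) (simp_all add: U_def)
  also have "\<dots> = 4 * real J * C * \<rho> * fmax\<^sup>2 / (c * fmin\<^sup>2 * g) * R / real J / real m"
    using \<open>0 < fmax\<close> \<open>0 < fmin\<close> \<open>0 < g\<close> \<open>0 < \<rho>\<close> \<open>0 < P\<close> \<open>0 < H\<close> \<open>0 < C * H\<close> \<open>0 < c\<close>
    by (simp add: U_def L_def field_simps)
  also have "\<dots> \<le> K / real m"
  proof (rule divide_right_mono)
    define K' where "K' = 4 * real J * C * \<rho> * fmax\<^sup>2 / (c * fmin\<^sup>2 * g) * R"
    have "0 \<le> K'"
      unfolding K'_def using \<open>0 \<le> R\<close> \<open>0 < c\<close> \<open>0 < fmin\<close> \<open>0 < g\<close> \<open>0 < \<rho>\<close> \<open>0 < C * H\<close> \<open>0 < H\<close>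
      by (intro mult_nonneg_nonneg divide_nonneg_pos) (auto simp: zero_less_mult_iff)
    then have "K' / real J \<le> K'"
      using \<open>1 \<le> J\<close> by (simp add: divide_le_eq mult_le_cancel_left1)
    also have "K' \<le> K"
      by (simp add: K'_def K_def R_def g_def)
    finally show "4 * real J * C * \<rho> * fmax\<^sup>2 / (c * fmin\<^sup>2 * g) * R / real J \<le> K"
      unfolding K'_def .
  qed simp
  finally show ?thesis .
qed

section \<open>Asymptotics\<close>

lemma grid_sum_squared_le:
  fixes g :: "nat \<Rightarrow> nat \<Rightarrow> real"
  shows "(\<Sum>i=1..m. \<Sum>j=1..J. g i j)\<^sup>2 \<le> real (m * J) * (\<Sum>i=1..m. \<Sum>j=1..J. (g i j)\<^sup>2)"
proof -
  have grid: "(\<Sum>i=1..m. \<Sum>j=1..J. h i j) = (\<Sum>p\<in>{1..m} \<times> {1..J}. h (fst p) (snd p))"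
    for h :: "nat \<Rightarrow> nat \<Rightarrow> real"
    by (simp add: sum.cartesian_product case_prod_beta)
  show ?thesis
    using sum_squared_le_sum_of_squares[of "\<lambda>p. g (fst p) (snd p)" "{1..m} \<times> {1..J}"]
    unfolding grid[of g] grid[of "\<lambda>i j. (g i j)\<^sup>2"] by (simp add: card_cartesian_product mult.commute)
qed

lemma weights_norm_asymptotics:
  fixes w :: "nat \<Rightarrow> nat \<Rightarrow> nat \<Rightarrow> real" and m :: "nat \<Rightarrow> nat" and J :: nat and K :: real
  assumes "1 \<le> J" and m_pos: "\<And>k. 1 \<le> m k"
    and sum_1: "\<And>k. (\<Sum>i=1..m k. \<Sum>j=1..J. w k i j) = 1"
    and upper: "\<forall>\<^sub>F k in sequentially. (\<Sum>i=1..m k. \<Sum>j=1..J. (w k i j)\<^sup>2) \<le> K / real (m k)"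
  shows "(\<lambda>k. \<Sum>i=1..m k. \<Sum>j=1..J. \<bar>w k i j\<bar>) \<in> O[sequentially](\<lambda>k. 1)"
    and "(\<lambda>k. \<Sum>i=1..m k. \<Sum>j=1..J. (w k i j)\<^sup>2) \<in> \<Theta>[sequentially](\<lambda>k. 1 / real (m k))"
proof -
  have mJ: "0 < real (m k) * real J" for k
    using m_pos[of k] \<open>1 \<le> J\<close> by simp
  have lower: "1 / real J * (1 / real (m k)) \<le> (\<Sum>i=1..m k. \<Sum>j=1..J. (w k i j)\<^sup>2)" for k
    using grid_sum_squared_le[where m = "m k" and J = J and g = "w k"] sum_1[of k] mJ[of k]
    by (simp add: divide_le_eq mult.commute)
  have "(\<Sum>i=1..m k. \<Sum>j=1..J. \<bar>w k i j\<bar>) \<le> sqrt (real J * K)"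
    if "(\<Sum>i=1..m k. \<Sum>j=1..J. (w k i j)\<^sup>2) \<le> K / real (m k)" for k
  proof -
    have "(\<Sum>i=1..m k. \<Sum>j=1..J. \<bar>w k i j\<bar>)\<^sup>2
        \<le> real (m k) * real J * (\<Sum>i=1..m k. \<Sum>j=1..J. (w k i j)\<^sup>2)"
      using grid_sum_squared_le[where m = "m k" and J = J and g = "\<lambda>i j. \<bar>w k i j\<bar>"] by simp
    also have "\<dots> \<le> real (m k) * real J * (K / real (m k))"
      using that mJ[of k] by (intro mult_left_mono) auto
    also have "\<dots> = real J * K"
      using m_pos[of k] by simp
    finally show ?thesis
      by (simp add: real_le_rsqrt sum_nonneg)
  qed
  then have "\<forall>\<^sub>F k in sequentially. (\<Sum>i=1..m k. \<Sum>j=1..J. \<bar>w k i j\<bar>) \<le> sqrt (real J * K)"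
    using upper by (rule eventually_mono[rotated])
  then show "(\<lambda>k. \<Sum>i=1..m k. \<Sum>j=1..J. \<bar>w k i j\<bar>) \<in> O[sequentially](\<lambda>k. 1)"
    by (intro bigoI[where c = "sqrt (real J * K)"]) (auto elim!: eventually_mono simp: sum_nonneg)
  obtain k where "(\<Sum>i=1..m k. \<Sum>j=1..J. (w k i j)\<^sup>2) \<le> K / real (m k)"
    using upper eventually_sequentially by auto
  with lower[of k] have "1 / real J / real (m k) \<le> K / real (m k)"
    by simp
  then have "1 / real J \<le> K"
    using m_pos[of k] divide_le_cancel[of "1 / real J" "real (m k)" K] by simp
  moreover have "0 < 1 / real J"
    using \<open>1 \<le> J\<close> by simp
  ultimately have "0 < K"
    by linarith
  show "(\<lambda>k. \<Sum>i=1..m k. \<Sum>j=1..J. (w k i j)\<^sup>2) \<in> \<Theta>[sequentially](\<lambda>k. 1 / real (m k))"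
  proof (rule bigthetaI'[of "1 / real J" K])
    show "\<forall>\<^sub>F k in sequentially. 1 / real J * norm (1 / real (m k))
        \<le> norm (\<Sum>i=1..m k. \<Sum>j=1..J. (w k i j)\<^sup>2)
      \<and> norm (\<Sum>i=1..m k. \<Sum>j=1..J. (w k i j)\<^sup>2) \<le> K * norm (1 / real (m k))"
      using upper by eventually_elim (use lower in \<open>simp add: sum_nonneg\<close>)
  qed (use \<open>1 \<le> J\<close> \<open>0 < K\<close> in simp_all)
qed

lemma ntot_pos:
  assumes "1 \<le> m" and "\<And>i. i \<in> {1..m} \<Longrightarrow> c * real (ntot m nb) powr s < real (nb i)"
    and "0 \<le> c"
  shows "0 < ntot m nb"
proof -
  have "0 < nb 1"
    using assms(2)[of 1] \<open>1 \<le> m\<close> \<open>0 \<le> c\<close>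
    by (metis atLeastAtMost_iff le_refl mult_nonneg_nonneg of_nat_0_less_iff order_le_less_trans
        powr_ge_zero)
  then show ?thesis
    using member_le_sum[of 1 "{1..m}" nb] \<open>1 \<le> m\<close> by (simp add: ntot_def)
qed

lemma batch_size_bounds:
  fixes Mb x r :: real
  assumes "0 < Mb" and "Mb powr (-2) * x < r" "r < Mb\<^sup>2 * x"
  shows "Mb powr (-2) * x \<le> r \<and> r \<le> Mb ^ 4 * (Mb powr (-2) * x)"
  using assms by (simp add: powr_minus power_numeral_reduce field_simps)

theorem corollary1:
  fixes J :: nat and m :: "nat \<Rightarrow> nat" and nb :: "nat \<Rightarrow> nat \<Rightarrow> nat"
    and h :: "nat \<Rightarrow> nat \<Rightarrow> nat \<Rightarrow> real" and tb :: "nat \<Rightarrow> real" and dt :: real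
    and f f' F :: "real \<Rightarrow> real"
    and mreg sig fX K :: "real \<Rightarrow> real" and Ix :: "real set"
    and Mw dtau lmin lmax Mb s nu dK sK :: real
  defines "n \<equiv> \<lambda>k. real (ntot (m k) (nb k))"
  defines "tau \<equiv> \<lambda>k. tau_grid (m k) J dt (tb k)"
  defines "w \<equiv> \<lambda>k. omega_star f F (m k) J (nb k) (tau k) (h k)"
  assumes asymp: "filterlim n at_top sequentially"
    and J_pos: "J \<ge> 1" and m_pos: "\<forall>k. m k \<ge> 1"
    \<comment> \<open>(A1): distribution of epsilon: density f, CDF F, mean 0, variance 1\<close>
    and f_pos: "\<forall>x. f x > 0"
    and f_dens: "(f has_integral 1) UNIV"
    and F_cdf: "\<forall>x. (f has_integral F x) {..x}"
    and eps_mean: "((\<lambda>x. x * f x) has_integral 0) UNIV"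
    and eps_var: "((\<lambda>x. x\<^sup>2 * f x) has_integral 1) UNIV"
    and f_deriv: "\<forall>x. (f has_real_derivative f' x) (at x)"
    and f'_cont: "continuous_on UNIV f'" and f'_bdd: "bounded (range f')"
    \<comment> \<open>(A1): regularity of f_X, m, sigma on an open I_x in [0,1]\<close>
    and Ix: "open Ix" "Ix \<subseteq> {0..1}"
    and fX_sig_pos: "\<forall>x\<in>Ix. fX x > 0 \<and> sig x > 0"
    and C2: "C2_on Ix fX" "C2_on Ix mreg" "C2_on Ix sig"
    \<comment> \<open>(A2): kernel\<close>
    and K_lip: "\<exists>L. L-lipschitz_on UNIV K"
    and K_nonneg: "\<forall>u. K u \<ge> 0"
    and K_supp: "\<exists>a. \<forall>u. \<bar>u\<bar> > a \<longrightarrow> K u = 0"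
    and K_int: "(K has_integral 1) UNIV"
    and K_mom1: "((\<lambda>u. u * K u) has_integral 0) UNIV"
    and K_mom2: "(\<lambda>u. u\<^sup>2 * K u) integrable_on UNIV"
    and K_sq: "(\<lambda>u. (K u)\<^sup>2) integrable_on UNIV"
    and K_lower: "dK > 0" "sK > 0" "\<forall>u\<in>{-sK..sK}. K u \<ge> dK"
    \<comment> \<open>(A3)\<close>
    and A3_consts: "Mw > 0" "0 < dtau" "dtau < 1/2" "0 < lmin" "lmin < lmax"
    and A3_sum1: "\<forall>k. (\<Sum>i=1..m k. \<Sum>j=1..J. w k i j) = 1"
    and A3_sumq: "\<forall>k. (\<Sum>i=1..m k. \<Sum>j=1..J. w k i j * quantile F (tau k i j)) = 0"
    and A3_inf: "\<forall>k. \<forall>i\<in>{1..m k}. \<forall>j\<in>{1..J}. \<bar>w k i j\<bar> < Mw"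
    and A3_tau: "\<forall>k. \<forall>i\<in>{1..m k}. \<forall>j\<in>{1..J}. dtau < tau k i j \<and> tau k i j < 1 - dtau"
    and A3_eig: "\<forall>k. \<forall>i\<in>{1..m k}. \<forall>l. eigenvalue (R1mat f F J (tau k i)) l
                    \<longrightarrow> lmin < l \<and> l < lmax"
    \<comment> \<open>(A4)\<close>
    and A4_consts: "Mb > 0" "2/3 < s" "s \<le> 1" "0 < nu" "nu < 3 - 2 / s"
    and A4_nb: "\<forall>k. \<forall>i\<in>{1..m k}.
                  Mb powr (-2) * n k powr s < real (nb k i) \<and> real (nb k i) < Mb\<^sup>2 * n k powr s"
    and h_pos: "\<forall>k i j. h k i j > 0"
    and A4_h: "\<exists>c C. 0 < c \<and> 0 < C \<and> (\<forall>\<^sub>F k in sequentially. \<forall>i\<in>{1..m k}. \<forall>j\<in>{1..J}.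
                  c * n k powr (- s * nu) \<le> h k i j \<and> h k i j \<le> C * n k powr (- s * nu))"
    \<comment> \<open>choice of the centre of the quantile levels\<close>
    and dt_pos: "dt > 0"
    and tb_int: "\<forall>k. dtau \<le> tb k - dt / 2 \<and> tb k + dt / 2 \<le> 1 - dtau"
    and tb_choice:
      "(\<forall>k. (\<Sum>i=1..m k. \<Sum>j=1..J. quantile F (tau k i j)) = 0)
       \<or> (\<forall>k. stackv (m k) J (\<lambda>_ _. 1) \<bullet>
               (minv (Smat f F (m k) J (nb k) (tau k) (\<lambda>i j. real (nb k i) powr (- nu)))
                 *\<^sub>v stackv (m k) J (\<lambda>i j. quantile F (tau k i j))) = 0)"
  shows "(\<lambda>k. \<Sum>i=1..m k. \<Sum>j=1..J. \<bar>w k i j\<bar>) \<in> O[sequentially](\<lambda>k. 1)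
       \<and> (\<lambda>k. \<Sum>i=1..m k. \<Sum>j=1..J. (w k i j)\<^sup>2) \<in> \<Theta>[sequentially](\<lambda>k. 1 / real (m k))"
proof -
  \<comment> \<open>The constraints of (A3) already make the weights feasible.\<close>
  have "continuous_on UNIV f"
    by (intro continuous_at_imp_continuous_on ballI) (use f_deriv DERIV_isCont in blast)
  then interpret positive_density f F
    using f_pos f_dens F_cdf by unfold_locales auto
  obtain a b fmin fmax where "a \<le> b" "0 < fmin"
    and bracket: "\<And>\<tau>. dtau < \<tau> \<Longrightarrow> \<tau> < 1 - dtau \<Longrightarrow> quantile F \<tau> \<in> {a..b} \<and> F (quantile F \<tau>) = \<tau>"
      "\<And>u. u \<in> {a..b} \<Longrightarrow> fmin \<le> f u \<and> f u \<le> fmax" "fmax-lipschitz_on {a..b} F"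
    using quantile_bracket_regular[OF A3_consts(2)] by blast
  obtain c C where "0 < c" and bandwidth: "\<forall>\<^sub>F k in sequentially. \<forall>i\<in>{1..m k}. \<forall>j\<in>{1..J}.
      c * n k powr (- s * nu) \<le> h k i j \<and> h k i j \<le> C * n k powr (- s * nu)"
    using A4_h by blast
  have "\<forall>\<^sub>F k in sequentially. (\<Sum>i=1..m k. \<Sum>j=1..J. (w k i j)\<^sup>2) \<le>
      max 1 (4 * real J * C * Mb ^ 4 * fmax\<^sup>2 / (c * fmin\<^sup>2 * min dtau (dt / real J))
        * (1 + 16 * fmax\<^sup>2 * (max \<bar>a\<bar> \<bar>b\<bar>)\<^sup>2 / dt\<^sup>2)) / real (m k)"
    using bandwidth
  proof eventually_elim
    case (elim k)
    have "0 < n k"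
      unfolding n_def of_nat_0_less_iff
      by (rule ntot_pos[where c = "Mb powr (-2)" and s = s]) (use A4_nb m_pos in \<open>auto simp: n_def\<close>)
    have sizes: "Mb powr (-2) * n k powr s \<le> real (nb k i)
        \<and> real (nb k i) \<le> Mb ^ 4 * (Mb powr (-2) * n k powr s)" if "i \<in> {1..m k}" for i
      using A4_nb that A4_consts(1) by (intro batch_size_bounds) auto
    show ?case
      unfolding w_def tau_def
      by (intro omega_star_sum_sq_bound[where \<rho> = "Mb ^ 4" and H = "n k powr (- s * nu)"
            and P = "Mb powr (-2) * n k powr s"] bracket elim[rule_format]
          sizes A3_sum1[rule_format, unfolded w_def tau_def]
          A3_sumq[rule_format, unfolded w_def tau_def] A3_tau[rule_format, unfolded tau_def])
        (use J_pos m_pos dt_pos A3_consts A4_consts(1) \<open>0 < n k\<close> \<open>0 < fmin\<close> \<open>a \<le> b\<close>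
          \<open>0 < c\<close> in auto)
  qed
  then show ?thesis
    using weights_norm_asymptotics[OF J_pos] m_pos A3_sum1 by blast
qed

end
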